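(* In the free-group setting described in the context, the extension $\pi_Y\circ\pi_f:X_f\to Y$ has a unique RIM.
   Context: Let $r\ge2$ and $\Gamma=F_r$ free on $S=\{a,b,a_3,\dots,a_r\}$. $Y$ is the Gromov boundary: infinite reduced words in $S\cup S^{-1}$, with $\Gamma$ acting by concatenation and cancellation. For nontrivial $s\in\Gamma$, $y\in Y$ starts with $s$ if $y=sy'$ with $y'\in Y$ and the last letter of the reduced word of $s$ not the inverse of the first letter of $y'$; $V_s$ is the set of such $y$; $a^\infty\in Y$ is the constant word $a$. Let $\{\Gamma_n\}$ be a strictly decreasing sequence of finite-index normal subgroups with trivial intersection, $Z=\varprojlim\Gamma/\Gamma_n$ (compact group containing $\Gamma$, with left translation action), $\pi_n:Z\to\Gamma/\Gamma_n$ the quotient maps, $X=Y\times Z$ with the product action, and $\pi_Y:X\to Y$ the projection. For $n\ge2$ choose $\gamma_n\in\Gamma_{n-1}\setminus\Gamma_n$, and set $u_n=a^nba^{-n}b^{-1}$, $D_n=V_{u_n}$, $C_n=\pi_n^{-1}(\gamma_n\Gamma_n)$, $X_+=\bigcup_{n\ge2}D_n\times C_n$, $X_-=X\setminus(X_+\cup\{(a^\infty,e_\Gamma)\})$, and $f:X\setminus\{(a^\infty,e_\Gamma)\}\to\{1,-1\}$, $f=1$ on $X_+$, $f=-1$ on $X_-$. Then $f$ is continuous and not continuously extendable, and $\Gamma\curvearrowright X_f$, $\pi_f:X_f\to X$ is the McMahon extension: the (unique up to conjugacy) minimal continuous action on a compact metrizable space with equivariant continuous surjection $\pi_f$ whose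 fibers are one point off the orbit $\Gamma(a^\infty,e_\Gamma)$ and two points on it, such that $f\circ\pi_f$ extends continuously from $X_f\setminus\pi_f^{-1}(a^\infty,e_\Gamma)$ to $X_f$. A RIM for an extension $\pi:\tilde X\to Y$ is a continuous $\Gamma$-equivariant map $y\mapsto\mu_y$ from $Y$ to the Borel probability measures on $\tilde X$ (weak$^*$ topology) with $\mathrm{supp}\,\mu_y\subseteq\pi^{-1}(y)$. *)

theory Defs
  imports "HOL-Analysis.Analysis" "HOL-Probability.Probability" "HOL-Algebra.Coset"
begin

text \<open>A letter (i, False) is the generator number i, (i, True) is its inverse.
  Generator 0 is a, generator 1 is b, generator i-1 is a_i for 3 \<le> i \<le> r.\<close>

type_synonym letter = "nat \<times> bool"
type_synonym word = "letter list"

definition linv :: "letter \<Rightarrow> letter" where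
  "linv l = (fst l, \<not> snd l)"

definition reduced :: "word \<Rightarrow> bool" where
  "reduced w \<longleftrightarrow> (\<forall>i. Suc i < length w \<longrightarrow> w ! Suc i \<noteq> linv (w ! i))"

definition FG_carrier :: "nat \<Rightarrow> word set" where
  "FG_carrier r = {w. reduced w \<and> (\<forall>l\<in>set w. fst l < r)}"

fun cons_red :: "letter \<Rightarrow> word \<Rightarrow> word" where
  "cons_red a [] = [a]"
| "cons_red a (c # w) = (if c = linv a then w else a # c # w)"

definition fg_mult :: "word \<Rightarrow> word \<Rightarrow> word" where
  "fg_mult v w = foldr cons_red v w"

definition FG :: "nat \<Rightarrow> word monoid" where
  "FG r = \<lparr>carrier = FG_carrier r, mult = fg_mult, one = []\<rparr>"

definition fg_inv :: "word \<Rightarrow> word" where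
  "fg_inv w = rev (map linv w)"

definition gen_a :: letter where "gen_a = (0, False)"
definition gen_b :: letter where "gen_b = (1, False)"

section \<open>The Gromov boundary Y: infinite reduced words\<close>

definition Yset :: "nat \<Rightarrow> (nat \<Rightarrow> letter) set" where
  "Yset r = {y. (\<forall>n. fst (y n) < r) \<and> (\<forall>n. y (Suc n) \<noteq> linv (y n))}"

text \<open>Topology of Y: the subspace topology of the product of discrete letter sets
  (the usual topology of the Gromov boundary of a free group).\<close>
definition topY :: "nat \<Rightarrow> (nat \<Rightarrow> letter) topology" where
  "topY r = subtopology (product_topology (\<lambda>_::nat. discrete_topology (UNIV :: letter set)) UNIV) (Yset r)"

definition cons_inf :: "letter \<Rightarrow> (nat \<Rightarrow> letter) \<Rightarrow> (nat \<Rightarrow> letter)" where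
  "cons_inf a y = (if y 0 = linv a then (\<lambda>n. y (Suc n)) else (\<lambda>n. if n = 0 then a else y (n - 1)))"

definition actY :: "word \<Rightarrow> (nat \<Rightarrow> letter) \<Rightarrow> (nat \<Rightarrow> letter)" where
  "actY w y = foldr cons_inf w y"

text \<open>V_s: the infinite reduced words starting with s.\<close>
definition Vset :: "nat \<Rightarrow> word \<Rightarrow> (nat \<Rightarrow> letter) set" where
  "Vset r s = {y \<in> Yset r. \<exists>y' \<in> Yset r. y = actY s y' \<and> last s \<noteq> linv (y' 0)}"

definition a_inf :: "nat \<Rightarrow> letter" where
  "a_inf = (\<lambda>_. gen_a)"

definition u_word :: "nat \<Rightarrow> word" where
  "u_word n = replicate n gen_a @ [gen_b] @ replicate n (linv gen_a) @ [linv gen_b]"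

text \<open>An element of Z is a compatible sequence of cosets z n \<in> Gamma/Gamma_n (n \<ge> 1);
  the unused coordinate 0 is fixed to be empty.\<close>
definition Zset :: "nat \<Rightarrow> (nat \<Rightarrow> word set) \<Rightarrow> (nat \<Rightarrow> word set) set" where
  "Zset r N = {z. z 0 = {} \<and> (\<forall>n\<ge>1. z n \<in> rcosets\<^bsub>FG r\<^esub> (N n) \<and> z (Suc n) \<subseteq> z n)}"

definition topZ :: "nat \<Rightarrow> (nat \<Rightarrow> word set) \<Rightarrow> (nat \<Rightarrow> word set) topology" where
  "topZ r N = subtopology (product_topology (\<lambda>_::nat. discrete_topology (UNIV :: word set set)) UNIV) (Zset r N)"

definition actZ :: "nat \<Rightarrow> word \<Rightarrow> (nat \<Rightarrow> word set) \<Rightarrow> (nat \<Rightarrow> word set)" where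
  "actZ r g z = (\<lambda>n. if n = 0 then {} else g <#\<^bsub>FG r\<^esub> z n)"

definition eZ :: "(nat \<Rightarrow> word set) \<Rightarrow> (nat \<Rightarrow> word set)" where
  "eZ N = (\<lambda>n. if n = 0 then {} else N n)"

definition Cset :: "nat \<Rightarrow> (nat \<Rightarrow> word set) \<Rightarrow> (nat \<Rightarrow> word) \<Rightarrow> nat \<Rightarrow> (nat \<Rightarrow> word set) set" where
  "Cset r N \<gamma> n = {z \<in> Zset r N. z n = \<gamma> n <#\<^bsub>FG r\<^esub> N n}"

type_synonym ptX = "(nat \<Rightarrow> letter) \<times> (nat \<Rightarrow> word set)"

definition Xset :: "nat \<Rightarrow> (nat \<Rightarrow> word set) \<Rightarrow> ptX set" where
  "Xset r N = Yset r \<times> Zset r N"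

definition topX :: "nat \<Rightarrow> (nat \<Rightarrow> word set) \<Rightarrow> ptX topology" where
  "topX r N = prod_topology (topY r) (topZ r N)"

definition actX :: "nat \<Rightarrow> word \<Rightarrow> ptX \<Rightarrow> ptX" where
  "actX r g p = (actY g (fst p), actZ r g (snd p))"

definition x0 :: "(nat \<Rightarrow> word set) \<Rightarrow> ptX" where
  "x0 N = (a_inf, eZ N)"

definition Xplus :: "nat \<Rightarrow> (nat \<Rightarrow> word set) \<Rightarrow> (nat \<Rightarrow> word) \<Rightarrow> ptX set" where
  "Xplus r N \<gamma> = (\<Union>n\<in>{2..}. Vset r (u_word n) \<times> Cset r N \<gamma> n)"

definition Xminus :: "nat \<Rightarrow> (nat \<Rightarrow> word set) \<Rightarrow> (nat \<Rightarrow> word) \<Rightarrow> ptX set" where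
  "Xminus r N \<gamma> = Xset r N - (Xplus r N \<gamma> \<union> {x0 N})"

text \<open>f : X - {x0} \<rightarrow> {1,-1}, (values outside X - {x0} are irrelevant)\<close>
definition fX :: "nat \<Rightarrow> (nat \<Rightarrow> word set) \<Rightarrow> (nat \<Rightarrow> word) \<Rightarrow> ptX \<Rightarrow> real" where
  "fX r N \<gamma> p = (if p \<in> Xplus r N \<gamma> then 1 else -1)"

definition admissible_seq :: "nat \<Rightarrow> (nat \<Rightarrow> word set) \<Rightarrow> bool" where
  "admissible_seq r N \<longleftrightarrow>
     (\<forall>n\<ge>1. N n \<lhd> FG r \<and> finite (rcosets\<^bsub>FG r\<^esub> (N n)) \<and> N (Suc n) \<subset> N n)
     \<and> (\<Inter>n\<in>{1..}. N n) = {[]}"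

definition admissible_gamma :: "nat \<Rightarrow> (nat \<Rightarrow> word set) \<Rightarrow> (nat \<Rightarrow> word) \<Rightarrow> bool" where
  "admissible_gamma r N \<gamma> \<longleftrightarrow> (\<forall>n\<ge>2. \<gamma> n \<in> N (n - 1) - N n)"

definition cont_action :: "nat \<Rightarrow> (word \<Rightarrow> 'x::topological_space \<Rightarrow> 'x) \<Rightarrow> bool" where
  "cont_action r \<phi> \<longleftrightarrow>
     (\<forall>x. \<phi> [] x = x) \<and>
     (\<forall>g\<in>FG_carrier r. \<forall>h\<in>FG_carrier r. \<forall>x. \<phi> (fg_mult g h) x = \<phi> g (\<phi> h x)) \<and>
     (\<forall>g\<in>FG_carrier r. continuous_on UNIV (\<phi> g))"

definition minimal_action :: "nat \<Rightarrow> (word \<Rightarrow> 'x::topological_space \<Rightarrow> 'x) \<Rightarrow> bool" where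
  "minimal_action r \<phi> \<longleftrightarrow>
     (\<forall>A. closed A \<and> A \<noteq> {} \<and> (\<forall>g\<in>FG_carrier r. \<phi> g ` A \<subseteq> A) \<longrightarrow> A = UNIV)"

text \<open>The McMahon extension pi_f : X_f \<rightarrow> X (characterising properties).\<close>
definition mcmahon_ext ::
  "nat \<Rightarrow> (nat \<Rightarrow> word set) \<Rightarrow> (nat \<Rightarrow> word) \<Rightarrow> (word \<Rightarrow> 'x::topological_space \<Rightarrow> 'x) \<Rightarrow> ('x \<Rightarrow> ptX) \<Rightarrow> bool" where
  "mcmahon_ext r N \<gamma> \<phi> \<pi> \<longleftrightarrow>
     compact (UNIV :: 'x set) \<and> metrizable_space (euclidean :: 'x topology) \<and>
     cont_action r \<phi> \<and> minimal_action r \<phi> \<and>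
     continuous_map euclidean (topX r N) \<pi> \<and> \<pi> ` UNIV = Xset r N \<and>
     (\<forall>g\<in>FG_carrier r. \<forall>x. \<pi> (\<phi> g x) = actX r g (\<pi> x)) \<and>
     (\<forall>p\<in>Xset r N. p \<notin> (\<lambda>g. actX r g (x0 N)) ` FG_carrier r
          \<longrightarrow> card (\<pi> -` {p}) = 1) \<and>
     (\<forall>p\<in>(\<lambda>g. actX r g (x0 N)) ` FG_carrier r. card (\<pi> -` {p}) = 2) \<and>
     (\<exists>F. continuous_on UNIV F \<and> (\<forall>x. \<pi> x \<noteq> x0 N \<longrightarrow> F x = fX r N \<gamma> (\<pi> x)))"

definition msupp :: "'x::topological_space measure \<Rightarrow> 'x set" where
  "msupp M = {x. \<forall>U. open U \<and> x \<in> U \<longrightarrow> emeasure M U > 0}"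

text \<open>Continuity into the weak* topology means continuity of y \<mapsto> \<integral> g d mu_y for
  every continuous real g (X_f compact).\<close>
definition is_RIM ::
  "nat \<Rightarrow> (word \<Rightarrow> 'x::topological_space \<Rightarrow> 'x) \<Rightarrow> ('x \<Rightarrow> nat \<Rightarrow> letter) \<Rightarrow> ((nat \<Rightarrow> letter) \<Rightarrow> 'x measure) \<Rightarrow> bool" where
  "is_RIM r \<phi> p \<mu> \<longleftrightarrow>
     (\<forall>y\<in>Yset r. sets (\<mu> y) = sets borel \<and> prob_space (\<mu> y)) \<and>
     (\<forall>g :: 'x \<Rightarrow> real. continuous_on UNIV g \<longrightarrow>
         continuous_map (topY r) euclideanreal (\<lambda>y. integral\<^sup>L (\<mu> y) g)) \<and>
     (\<forall>w\<in>FG_carrier r. \<forall>y\<in>Yset r. \<mu> (actY w y) = distr (\<mu> y) borel (\<phi> w)) \<and>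
     (\<forall>y\<in>Yset r. msupp (\<mu> y) \<subseteq> p -` {y})"

end

(*
  Existence: let m be Haar measure on the profinite completion Z.  Off the orbit of
  (a^oo, e) the map pi_f is injective, and for fixed y only countably many z have (y, z) on
  that orbit, an m-null set.  So z |-> pi_f^-1 (y, z) is defined m-almost everywhere, and
  mu_y is the image of m under it.  Because pi_f is a closed map, this inverse is continuous
  wherever pi_f is injective; this gives measurability and, by dominated convergence,
  continuity of y |-> mu_y.  Equivariance follows from the invariance of m.

  Uniqueness: let nu be any RIM and c a coset of Gamma_n.  The set A of points of X_f
  whose Z-coordinate lies in c is clopen, so nu_y(A) depends continuously on y.  It is
  unchanged under y |-> h y for h in Gamma_n, and every Gamma_n-orbit in Y is dense, so
  nu_y(A) does not depend on y.  Translating c then shows nu_y(A) = 1 / [Gamma : Gamma_n].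
  Hence the Z-marginal of nu_y is m.  Now nu_y lives on the fibre over y and gives no mass
  to the preimage of the countable orbit set.  So nu_y(U), for U open, is the m-measure of
  {z. pi_f^-1 (y, z) in U}, which is exactly mu_y(U).
*)
theory Submission
  imports Defs "HOL-Algebra.Multiplicative_Group"
begin

lemma (in group) rcos_mult_right_cancel:
  assumes "subgroup H G" "a \<in> carrier G" "b \<in> carrier G" "p \<in> carrier G"
  shows "H #> (a \<otimes> p) = H #> (b \<otimes> p) \<longleftrightarrow> H #> a = H #> b"
proof -
  have H: "H \<subseteq> carrier G"
    using assms(1) by (rule subgroup.subset)
  have split: "H #> (c \<otimes> p) = (H #> c) #> p" if "c \<in> carrier G" for c
    using that assms(4) H by (simp add: coset_mult_assoc)
  have "H #> (c \<otimes> p) #> inv p = H #> c" if "c \<in> carrier G" for c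
    using that assms(4) H by (simp add: coset_mult_assoc m_assoc)
  then show ?thesis
    using split assms(2,3) by (metis (no_types))
qed

lemma (in group) rcos_mult_absorb:
  assumes "subgroup H G" "h \<in> H" "p \<in> carrier G"
  shows "H #> (h \<otimes> p) = H #> p"
  using assms by (metis coset_join2 coset_mult_assoc subgroup.mem_carrier subgroup.subset)

lemma (in group) rcos_eq_mono:
  assumes "subgroup H G" "subgroup K G" "H \<subseteq> K" "a \<in> carrier G" "b \<in> carrier G"
    and "H #> a = H #> b"
  shows "K #> a = K #> b"
proof -
  have "b \<in> H #> a"
    using assms(1,5,6) rcos_self by blast
  then have "b \<in> K #> a"
    using assms(3) by (auto simp: r_coset_def)
  then show ?thesis
    using repr_independence assms(2,4) by blast
qed

lemma (in group) lcos_inv_cancel: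
  assumes "w \<in> carrier G" "A \<subseteq> carrier G"
  shows "inv w <# (w <# A) = A"
  using assms by (simp add: lcos_m_assoc lcos_mult_one)

lemma (in normal) lcos_rcosets:
  assumes "w \<in> carrier G" "c \<in> rcosets H"
  shows "w <# c \<in> rcosets H"
proof -
  obtain g where g: "g \<in> carrier G" "c = H #> g"
    using assms(2) by (auto simp: RCOSETS_def)
  then have "w <# c = H #> (w \<otimes> g)"
    using assms(1) by (simp add: coset_eq lcos_m_assoc subset)
  then show ?thesis
    using assms(1) g(1) by (simp add: rcosetsI subset)
qed

lemma (in normal) lcos_rcosets_fixed:
  assumes "h \<in> H" "c \<in> rcosets H"
  shows "h <# c = c"
proof -
  obtain g where g: "g \<in> carrier G" "c = H #> g"
    using assms(2) by (auto simp: RCOSETS_def)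
  then show ?thesis
    using assms(1) by (simp add: coset_assoc coset_join3 subgroup_axioms subset mem_carrier)
qed

lemma (in normal) lcos_rcosets_transitive:
  assumes "c \<in> rcosets H" "c' \<in> rcosets H"
  shows "\<exists>w\<in>carrier G. w <# c = c'"
proof -
  obtain g g' where g: "g \<in> carrier G" "c = H #> g" "g' \<in> carrier G" "c' = H #> g'"
    using assms by (auto simp: RCOSETS_def)
  then have "(g' \<otimes> inv g) <# c = c'"
    by (simp add: coset_eq lcos_m_assoc subset m_assoc)
  then show ?thesis
    using g by blast
qed

lemma (in normal) nat_pow_order_FactGroup_mem:
  assumes "x \<in> carrier G"
  shows "x [^] order (G Mod H) \<in> H"
proof -
  interpret Q: group "G Mod H" by (rule factorgroup_is_group)
  have "H #> x \<in> carrier (G Mod H)"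
    using assms by (auto simp: carrier_FactGroup)
  then have "H #> (x [^] order (G Mod H)) = H"
    using Q.pow_order_eq_1 FactGroup_pow[OF assms] by (metis one_FactGroup)
  then show ?thesis
    using coset_join1 assms nat_pow_closed subgroup_axioms by blast
qed

section \<open>Reduced words and dense orbits on the boundary\<close>

lemma linv_linv [simp]: "linv (linv a) = a"
  by (cases a) (simp add: linv_def)

lemma reduced_Cons: "reduced (a # xs) \<longleftrightarrow> reduced xs \<and> (xs \<noteq> [] \<longrightarrow> hd xs \<noteq> linv a)"
  unfolding reduced_def by (cases xs) (auto simp: nth_Cons split: nat.splits)

lemma reduced_append:
  assumes "reduced u" "reduced v" "u \<noteq> [] \<Longrightarrow> v \<noteq> [] \<Longrightarrow> hd v \<noteq> linv (last u)"
  shows "reduced (u @ v)"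
  using assms
proof (induction u)
  case (Cons a u)
  then have "reduced (u @ v)"
    by (cases "u = []") (simp_all add: reduced_Cons)
  with Cons.prems show ?case
    by (cases u) (auto simp: reduced_Cons)
qed simp

lemma fg_mult_append: "reduced (v @ w) \<Longrightarrow> fg_mult v w = v @ w"
proof (induction v)
  case (Cons a v)
  then have "fg_mult v w = v @ w" "v @ w \<noteq> [] \<longrightarrow> hd (v @ w) \<noteq> linv a"
    by (simp_all add: reduced_Cons)
  then show ?case by (cases "v @ w") (auto simp: fg_mult_def)
qed (simp add: fg_mult_def)

lemma actY_reduced:
  assumes "reduced w" "w \<noteq> [] \<Longrightarrow> y 0 \<noteq> linv (last w)"
  shows "actY w y i = (if i < length w then w ! i else y (i - length w))"
  using assms
proof (induction w arbitrary: i)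
  case (Cons a w)
  have IH: "actY w y j = (if j < length w then w ! j else y (j - length w))" for j
    using Cons.IH Cons.prems by (cases "w = []") (simp_all add: reduced_Cons)
  have "actY w y 0 = (if w = [] then y 0 else hd w)"
    using IH[of 0] by (cases w) auto
  then have "actY w y 0 \<noteq> linv a"
    using Cons.prems by (auto simp: reduced_Cons)
  then show ?case
    by (cases i) (auto simp: actY_def cons_inf_def IH[unfolded actY_def])
qed (simp add: actY_def)

lemma reduced_concat_replicate:
  assumes "reduced x" "x \<noteq> []" "hd x \<noteq> linv (last x)"
  shows "reduced (concat (replicate m x))"
proof (induction m)
  case (Suc m)
  then show ?case
    using assms by (cases m) (auto intro!: reduced_append)
qed (simp add: reduced_def)

lemma FG_nat_pow_cyclically_reduced:
  assumes "reduced x" "x \<noteq> []" "hd x \<noteq> linv (last x)"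
  shows "x [^]\<^bsub>FG r\<^esub> m = concat (replicate m x)"
proof (induction m)
  case (Suc m)
  have "concat (replicate m x) @ x = concat (replicate (Suc m) x)"
    by (simp flip: replicate_append_same)
  then show ?case
    using Suc reduced_concat_replicate[OF assms, of "Suc m"] by (simp add: FG_def fg_mult_append)
qed (simp add: FG_def)

lemma exists_letter_avoiding:
  fixes e1 e2 e3 :: letter
  shows "\<exists>t. fst t < 2 \<and> t \<noteq> e1 \<and> t \<noteq> e2 \<and> t \<noteq> e3"
proof -
  let ?L = "{(0::nat, False), (0, True), (1, False), (1, True)}"
  have "card {e1, e2, e3} < card ?L"
    by (simp add: card_insert_if)
  then have "\<not> ?L \<subseteq> {e1, e2, e3}"
    by (meson card_mono finite.emptyI finite_insert not_le)
  then obtain t where "t \<in> ?L" "t \<notin> {e1, e2, e3}"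
    by blast
  then show ?thesis
    by (intro exI[of _ t]) auto
qed

lemma cyclically_reduced_word_with_prefix:
  assumes "r \<ge> 2" and y0: "y0 \<in> Yset r"
  obtains x where "x \<in> carrier (FG r)" "reduced x" "hd x \<noteq> linv (last x)" "last x \<noteq> linv e"
    "k < length x" "\<And>i. i < k \<Longrightarrow> x ! i = y0 i"
proof -
  define w where "w = map y0 [0..<Suc k]"
  obtain t where t: "fst t < 2" "t \<noteq> linv (last w)" "t \<noteq> linv (hd w)" "t \<noteq> linv e"
    using exists_letter_avoiding by blast
  have w: "length w = Suc k" "\<And>i. i < Suc k \<Longrightarrow> w ! i = y0 i" "w \<noteq> []"
    by (simp_all add: w_def del: upt_Suc)
  have "reduced w"
    using y0 by (simp add: reduced_def Yset_def w)
  then have "reduced (w @ [t])"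
    using t(2) by (intro reduced_append) (simp_all add: reduced_def)
  moreover have "\<forall>l\<in>set (w @ [t]). fst l < r"
    using y0 t(1) assms(1) by (auto simp: w_def Yset_def)
  moreover have "hd (w @ [t]) \<noteq> linv (last (w @ [t]))"
    using t(3) w(3) by auto
  ultimately show ?thesis
    using t(4) w by (intro that[of "w @ [t]"]) (auto simp: FG_def FG_carrier_def nth_append)
qed

text \<open>A high power of a cyclically reduced word \<open>x\<close> lies in \<open>H\<close>, starts with \<open>x\<close> and acts on
  \<open>y\<close> without cancellation.\<close>

lemma finite_index_normal_orbit_dense:
  assumes "r \<ge> 2" and H: "H \<lhd> FG r" "finite (rcosets\<^bsub>FG r\<^esub> H)"
    and y0: "y0 \<in> Yset r" and y: "y \<in> Yset r"
  shows "\<exists>h\<in>H. \<forall>i<k. actY h y i = y0 i"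
proof -
  interpret H: normal H "FG r" by (rule H(1))
  obtain x where x: "x \<in> carrier (FG r)" "reduced x" "hd x \<noteq> linv (last x)" "last x \<noteq> linv (y 0)"
    "k < length x" "\<And>i. i < k \<Longrightarrow> x ! i = y0 i"
    using cyclically_reduced_word_with_prefix[OF assms(1) y0] by blast
  then have "x \<noteq> []"
    by auto
  define M where "M = order (FG r Mod H)"
  have "H #>\<^bsub>FG r\<^esub> x \<in> rcosets\<^bsub>FG r\<^esub> H"
    using x(1) by (intro H.rcosetsI H.subset)
  then have "M \<noteq> 0"
    using H(2) by (auto simp: M_def order_def FactGroup_def)
  then obtain m where "M = Suc m"
    using not0_implies_Suc by blast
  define h where "h = x [^]\<^bsub>FG r\<^esub> M"
  have "h \<in> H"
    unfolding h_def M_def by (rule H.nat_pow_order_FactGroup_mem) fact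
  have h_pow: "h = concat (replicate M x)"
    unfolding h_def by (rule FG_nat_pow_cyclically_reduced[OF x(2) \<open>x \<noteq> []\<close> x(3)])
  then have "reduced h"
    using reduced_concat_replicate[OF x(2) \<open>x \<noteq> []\<close> x(3)] by simp
  have h_prefix: "h = x @ concat (replicate m x)" and h_suffix: "h = concat (replicate m x) @ x"
    using h_pow \<open>M = Suc m\<close> by (simp, simp flip: replicate_append_same)
  have "h ! i = x ! i" "i < length h" if "i < length x" for i
    using that by (subst h_prefix, simp add: nth_append)+
  moreover have "y 0 \<noteq> linv (last h)"
    using x(4) \<open>x \<noteq> []\<close> by (subst h_suffix) auto
  ultimately have "actY h y i = y0 i" if "i < k" for i
    using that x(5,6) \<open>reduced h\<close> by (simp add: actY_reduced)
  with \<open>h \<in> H\<close> show ?thesis by blast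
qed

lemma openin_discrete_product_cylinder:
  "openin (product_topology (\<lambda>_::nat. discrete_topology (UNIV :: 'a set)) UNIV) {y'. \<forall>i<k. y' i = y i}"
proof -
  let ?X = "\<lambda>i. if i < k then {y i} else UNIV"
  have "openin (product_topology (\<lambda>_::nat. discrete_topology (UNIV :: 'a set)) UNIV) (Pi\<^sub>E UNIV ?X)"
    by (rule product_topology_basis) (auto intro: finite_subset[of _ "{..<k}"])
  moreover have "Pi\<^sub>E UNIV ?X = {y'. \<forall>i<k. y' i = y i}"
    by (auto simp: PiE_UNIV_domain Pi_def)
  ultimately show ?thesis by simp
qed

lemma discrete_product_cylinder_nbhd:
  assumes "openin (product_topology (\<lambda>_::nat. discrete_topology (UNIV :: 'a set)) UNIV) T" "y \<in> T"
  shows "\<exists>k. \<forall>y'. (\<forall>i<k. y' i = y i) \<longrightarrow> y' \<in> T"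
proof -
  obtain X where X: "y \<in> Pi\<^sub>E UNIV X" "finite {i. X i \<noteq> topspace (discrete_topology UNIV)}"
    "Pi\<^sub>E UNIV X \<subseteq> T"
    using product_topology_open_contains_basis[OF assms] by blast
  obtain k where k: "{i. X i \<noteq> topspace (discrete_topology UNIV)} \<subseteq> {..<k}"
    using finite_nat_bounded X(2) by blast
  have "y' \<in> T" if y': "\<forall>i<k. y' i = y i" for y'
  proof -
    have "\<forall>i. y' i \<in> X i"
    proof
      fix i show "y' i \<in> X i"
      proof (cases "i < k")
        case True
        then show ?thesis using y' X(1) by (simp add: PiE_UNIV_domain Pi_iff)
      next
        case False
        then have "X i = UNIV" using k by auto
        then show ?thesis by simp
      qed
    qed
    then show ?thesis
      using X(3) by (auto simp: PiE_UNIV_domain Pi_iff)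
  qed
  then show ?thesis by blast
qed

lemma topspace_topY [simp]: "topspace (topY r) = Yset r"
  by (simp add: topY_def)

lemma Hausdorff_topY: "Hausdorff_space (topY r)"
  unfolding topY_def by (intro Hausdorff_space_subtopology) (simp add: Hausdorff_space_product_topology)

lemma openin_topY_cylinder: "openin (topY r) {y' \<in> Yset r. \<forall>i<k. y' i = y i}"
  using openin_discrete_product_cylinder[of k y]
  unfolding topY_def openin_subtopology by blast

lemma topY_cylinder_nbhd:
  assumes "openin (topY r) V" "y \<in> V"
  shows "\<exists>k. \<forall>y'\<in>Yset r. (\<forall>i<k. y' i = y i) \<longrightarrow> y' \<in> V"
proof -
  obtain T where "openin (product_topology (\<lambda>_::nat. discrete_topology UNIV) UNIV) T" "V = T \<inter> Yset r"
    using assms(1) unfolding topY_def openin_subtopology by blast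
  then show ?thesis
    using discrete_product_cylinder_nbhd[of T y] assms(2) by blast
qed

lemma continuous_map_topY_realI:
  assumes "\<And>y e. y \<in> Yset r \<Longrightarrow> e > 0 \<Longrightarrow>
             \<exists>k. \<forall>y'\<in>Yset r. (\<forall>i<k. y' i = y i) \<longrightarrow> dist (f y') (f y) < e"
  shows "continuous_map (topY r) euclideanreal f"
  unfolding Met_TC.continuous_map_to_metric[unfolded mtopology_is_euclidean mball_eq_ball]
proof (intro ballI allI impI)
  fix y and e :: real
  assume "y \<in> topspace (topY r)" "e > 0"
  then obtain k where "\<forall>y'\<in>Yset r. (\<forall>i<k. y' i = y i) \<longrightarrow> dist (f y') (f y) < e"
    using assms[of y e] by auto
  then show "\<exists>U. openin (topY r) U \<and> y \<in> U \<and> (\<forall>y'\<in>U. f y' \<in> ball (f y) e)"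
    using openin_topY_cylinder[of r k y] \<open>y \<in> topspace (topY r)\<close>
    by (intro exI[of _ "{y' \<in> Yset r. \<forall>i<k. y' i = y i}"]) (auto simp: dist_commute)
qed

lemma continuous_on_indicator_clopen:
  assumes "open A" "closed A"
  shows "continuous_on UNIV (indicator A :: 'a::topological_space \<Rightarrow> real)"
  unfolding continuous_on_open_vimage[OF open_UNIV]
proof (intro allI impI)
  fix B :: "real set"
  have "indicator A -` B = (if 1 \<in> B then A else {}) \<union> (if 0 \<in> B then - A else {})"
    by (auto simp: indicator_def of_bool_def split: if_splits)
  then show "open (indicator A -` B \<inter> UNIV)"
    using assms by (cases "1 \<in> B"; cases "0 \<in> B") (simp_all add: open_Compl)
qed

lemma compact_disjoint_msupp_null:
  assumes "sets M = sets borel" "compact K" "closed K" "K \<inter> msupp M = {}"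
  shows "K \<in> null_sets M"
proof -
  let ?T = "{U. open U \<and> emeasure M U = 0}"
  have "K \<subseteq> \<Union>?T"
  proof
    fix x assume "x \<in> K"
    then have "x \<notin> msupp M"
      using assms(4) by blast
    then obtain U where "open U" "x \<in> U" "\<not> 0 < emeasure M U"
      unfolding msupp_def by blast
    then show "x \<in> \<Union>?T" by (auto simp: not_gr_zero)
  qed
  then obtain T' where T': "T' \<subseteq> ?T" "finite T'" "K \<subseteq> \<Union>T'"
    using compactE[OF assms(2)] by auto
  have "(\<Union>U\<in>T'. U) \<in> null_sets M"
    using T' assms(1) by (intro null_sets_UN' countable_finite) (auto simp: null_sets_def)
  moreover have "K \<in> sets M"
    using assms(1,3) by simp
  ultimately show ?thesis
    using T'(3) by (auto intro: null_sets_subset)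
qed

lemma (in prob_space) prob_equal_on_finite_partition:
  assumes "finite I" "disjoint_family_on A I" "(\<Union>i\<in>I. A i) = space M"
    and "A ` I \<subseteq> events" "\<And>i. i \<in> I \<Longrightarrow> prob (A i) = p"
  shows "p = 1 / card I"
proof -
  have "1 = prob (\<Union>i\<in>I. A i)"
    using assms(3) prob_space by simp
  also have "\<dots> = (\<Sum>i\<in>I. prob (A i))"
    using assms(1,4,2) by (rule finite_measure_finite_Union)
  also have "\<dots> = card I * p"
    using assms(5) by simp
  finally show ?thesis
    by (metis mult_zero_left nonzero_eq_divide_eq of_nat_0 zero_neq_one mult.commute)
qed

section \<open>The profinite completion and its Haar measure\<close>

locale profinite_completion =
  fixes r :: nat and N :: "nat \<Rightarrow> word set"
  assumes admissible: "admissible_seq r N"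
begin

abbreviation "G \<equiv> FG r"
abbreviation "Zs \<equiv> Zset r N"

lemma N_normal: "n \<ge> 1 \<Longrightarrow> N n \<lhd> G"
  using admissible by (simp add: admissible_seq_def)

lemma N_subgroup: "n \<ge> 1 \<Longrightarrow> subgroup (N n) G"
  using N_normal normal_imp_subgroup by blast

lemma finite_rcosets_N: "n \<ge> 1 \<Longrightarrow> finite (rcosets\<^bsub>G\<^esub> (N n))"
  using admissible by (simp add: admissible_seq_def)

lemma N_Suc_psubset: "n \<ge> 1 \<Longrightarrow> N (Suc n) \<subset> N n"
  using admissible by (simp add: admissible_seq_def)

sublocale G: group G
  using N_normal[of 1] normal.axioms(2) by auto

lemma carrier_G: "carrier G = FG_carrier r"
  by (simp add: FG_def)

lemma one_G: "\<one>\<^bsub>G\<^esub> = []"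
  by (simp add: FG_def)

lemma rcosets_N_subset: "n \<ge> 1 \<Longrightarrow> c \<in> rcosets\<^bsub>G\<^esub> (N n) \<Longrightarrow> c \<subseteq> carrier G"
  using subgroup.rcosets_carrier[OF N_subgroup G.is_group] by blast

lemma rcosets_N_nonempty: "n \<ge> 1 \<Longrightarrow> c \<in> rcosets\<^bsub>G\<^esub> (N n) \<Longrightarrow> c \<noteq> {}"
  using G.rcos_self[OF _ N_subgroup] by (auto simp: RCOSETS_def)

lemma rcosets_N_disjoint:
  "n \<ge> 1 \<Longrightarrow> c \<in> rcosets\<^bsub>G\<^esub> (N n) \<Longrightarrow> c' \<in> rcosets\<^bsub>G\<^esub> (N n) \<Longrightarrow> c \<inter> c' \<noteq> {} \<Longrightarrow> c = c'"
  using G.rcos_disjoint[OF N_subgroup] unfolding pairwise_def disjnt_def by blast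

lemma Zset_rcosets: "z \<in> Zs \<Longrightarrow> n \<ge> 1 \<Longrightarrow> z n \<in> rcosets\<^bsub>G\<^esub> (N n)"
  by (simp add: Zset_def)

lemma Zset_0: "z \<in> Zs \<Longrightarrow> z 0 = {}"
  by (simp add: Zset_def)

lemma Zset_antimono:
  assumes "z \<in> Zs" "1 \<le> m" "m \<le> n"
  shows "z n \<subseteq> z m"
  using assms(3)
proof (induction n rule: dec_induct)
  case (step k)
  then have "z (Suc k) \<subseteq> z k"
    using assms(1,2) by (simp add: Zset_def)
  with step.IH show ?case by blast
qed simp

lemma Zset_eq_below:
  assumes "z \<in> Zs" "z' \<in> Zs" "1 \<le> m" "m \<le> n" "z' n = z n"
  shows "z' m = z m"
proof -
  have "z n \<noteq> {}"
    using rcosets_N_nonempty[OF _ Zset_rcosets[OF assms(1)]] assms(3,4) by simp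
  then have "z m \<inter> z' m \<noteq> {}"
    using Zset_antimono assms by blast
  then show ?thesis
    using rcosets_N_disjoint Zset_rcosets assms(1-3) by metis
qed

lemma Zset_eqI:
  assumes "z \<in> Zs" "z' \<in> Zs" "\<And>n. n \<ge> 1 \<Longrightarrow> z' n = z n"
  shows "z' = z"
proof
  fix n show "z' n = z n"
    using assms Zset_0 by (cases n) auto
qed

lemma eZ_in_Zset: "eZ N \<in> Zs"
proof -
  have "N n \<in> rcosets\<^bsub>G\<^esub> (N n)" if "n \<ge> 1" for n
    using G.rcosetsI[OF subgroup.subset[OF N_subgroup[OF that]] G.one_closed] that
    by (simp add: subgroup.subset[OF N_subgroup])
  then show ?thesis
    using N_Suc_psubset by (auto simp: Zset_def eZ_def)
qed

lemma actZ_in_Zset: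
  assumes "w \<in> carrier G" "z \<in> Zs"
  shows "actZ r w z \<in> Zs"
proof -
  have "w <#\<^bsub>G\<^esub> A \<subseteq> w <#\<^bsub>G\<^esub> B" if "A \<subseteq> B" for A B
    using that by (auto simp: l_coset_def)
  then show ?thesis
    using assms normal.lcos_rcosets[OF N_normal] by (simp add: Zset_def actZ_def)
qed

lemma topspace_topZ [simp]: "topspace (topZ r N) = Zs"
  by (simp add: topZ_def)

lemma topspace_topX [simp]: "topspace (topX r N) = Xset r N"
  by (simp add: topX_def Xset_def)

lemma Hausdorff_topX: "Hausdorff_space (topX r N)"
  unfolding topX_def topZ_def
  by (intro Hausdorff_space_prod_topology[THEN iffD2] disjI2 conjI Hausdorff_topY
      Hausdorff_space_subtopology) (simp add: Hausdorff_space_product_topology)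

lemma continuous_map_topZ_component: "continuous_map (topZ r N) (discrete_topology UNIV) (\<lambda>z. z n)"
  unfolding topZ_def
  by (intro continuous_map_from_subtopology continuous_map_product_projection) simp

lemma topZ_cylinder_nbhd:
  assumes "openin (topZ r N) V" "z \<in> V"
  shows "\<exists>n\<ge>1. \<forall>z'\<in>Zs. z' n = z n \<longrightarrow> z' \<in> V"
proof -
  obtain T where T: "openin (product_topology (\<lambda>_::nat. discrete_topology UNIV) UNIV) T" "V = T \<inter> Zs"
    using assms(1) unfolding topZ_def openin_subtopology by blast
  then obtain k where k: "\<forall>z'. (\<forall>i<k. z' i = z i) \<longrightarrow> z' \<in> T"
    using discrete_product_cylinder_nbhd assms(2) by blast
  have z: "z \<in> Zs"
    using assms(2) T(2) by blast
  have "z' \<in> V" if z': "z' \<in> Zs" "z' (max 1 k) = z (max 1 k)" for z'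
  proof -
    have "z' i = z i" if "i < k" for i
    proof (cases i)
      case 0
      then show ?thesis using Zset_0[OF z] Zset_0[OF z'(1)] by simp
    next
      case (Suc j)
      then show ?thesis
        using Zset_eq_below[OF z z'(1), of i "max 1 k"] z'(2) that by simp
    qed
    then show ?thesis
      using k z'(1) T(2) by blast
  qed
  then show ?thesis
    by (intro exI[of _ "max 1 k"]) auto
qed

lemma topX_cylinder_nbhd:
  assumes "openin (topX r N) W" "(y, z) \<in> W"
  shows "\<exists>k n. n \<ge> 1 \<and> (\<forall>y'\<in>Yset r. \<forall>z'\<in>Zs. (\<forall>i<k. y' i = y i) \<longrightarrow> z' n = z n \<longrightarrow> (y', z') \<in> W)"
proof -
  have "\<forall>x y. (x, y) \<in> W \<longrightarrow> (\<exists>U V. openin (topY r) U \<and> openin (topZ r N) V \<and> x \<in> U \<and> y \<in> V \<and> U \<times> V \<subseteq> W)"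
    using assms(1) unfolding topX_def openin_prod_topology_alt .
  then have "\<exists>U V. openin (topY r) U \<and> openin (topZ r N) V \<and> y \<in> U \<and> z \<in> V \<and> U \<times> V \<subseteq> W"
    using assms(2) by simp
  then obtain U V where UV: "openin (topY r) U" "openin (topZ r N) V" "y \<in> U" "z \<in> V" "U \<times> V \<subseteq> W"
    by blast
  obtain k where k: "\<forall>y'\<in>Yset r. (\<forall>i<k. y' i = y i) \<longrightarrow> y' \<in> U"
    using topY_cylinder_nbhd[OF UV(1,3)] by blast
  obtain n where n: "n \<ge> 1" "\<forall>z'\<in>Zs. z' n = z n \<longrightarrow> z' \<in> V"
    using topZ_cylinder_nbhd[OF UV(2,4)] by blast
  have "(y', z') \<in> W" if "y' \<in> Yset r" "z' \<in> Zs" "\<forall>i<k. y' i = y i" "z' n = z n" for y' z'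
  proof -
    have "y' \<in> U" "z' \<in> V"
      using k n(2) that by blast+
    then show ?thesis
      using UV(5) by blast
  qed
  then show ?thesis
    using n(1) by blast
qed

definition Cyl :: "nat \<Rightarrow> word set \<Rightarrow> (nat \<Rightarrow> word set) set" where
  "Cyl n c = {z \<in> Zs. z n = c}"

definition Cyls :: "(nat \<Rightarrow> word set) set set" where
  "Cyls = insert {} (insert Zs (\<Union>n\<in>{1..}. Cyl n ` (rcosets\<^bsub>G\<^esub> (N n))))"

definition Zsigma :: "(nat \<Rightarrow> word set) measure" where
  "Zsigma = sigma Zs Cyls"

lemma Cyls_subset_Pow: "Cyls \<subseteq> Pow Zs"
  by (auto simp: Cyls_def Cyl_def)

lemma space_Zsigma [simp]: "space Zsigma = Zs"
  by (simp add: Zsigma_def space_measure_of_conv)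

lemma sets_Zsigma: "sets Zsigma = sigma_sets Zs Cyls"
  using Cyls_subset_Pow by (simp add: Zsigma_def)

lemma Cyl_in_Zsigma:
  assumes "n \<ge> 1"
  shows "Cyl n c \<in> sets Zsigma"
proof (cases "c \<in> rcosets\<^bsub>G\<^esub> (N n)")
  case True
  then show ?thesis
    using assms by (auto simp: sets_Zsigma Cyls_def)
next
  case False
  then have "Cyl n c = {}"
    using Zset_rcosets assms by (auto simp: Cyl_def)
  then show ?thesis by simp
qed

lemma Cyl_Int_Cyl:
  assumes "1 \<le> m" "m \<le> n"
  shows "Cyl n c \<inter> Cyl m c' \<in> {Cyl n c, {}}"
proof (cases "Cyl n c \<inter> Cyl m c' = {}")
  case False
  then obtain z where z: "z \<in> Cyl n c" "z \<in> Cyl m c'"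
    by blast
  have "Cyl n c \<subseteq> Cyl m c'"
    using z Zset_eq_below[of z _ m n] assms by (auto simp: Cyl_def)
  then show ?thesis by blast
qed simp

lemma Cyls_cases:
  assumes "A \<in> Cyls"
  obtains "A = {}" | "A = Zs" | n c where "n \<ge> 1" "c \<in> rcosets\<^bsub>G\<^esub> (N n)" "A = Cyl n c"
  using assms by (auto simp: Cyls_def)

lemma Int_stable_Cyls: "Int_stable Cyls"
proof (rule Int_stableI)
  have Cyls_cases: "a = {} \<or> a = Zs \<or> (\<exists>n c. n \<ge> 1 \<and> c \<in> rcosets\<^bsub>G\<^esub> (N n) \<and> a = Cyl n c)"
    if "a \<in> Cyls" for a
    using that by (auto simp: Cyls_def)
  have Cyl_Int: "Cyl n c \<inter> Cyl m c' \<in> Cyls"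
    if "n \<ge> 1" "m \<ge> 1" "c \<in> rcosets\<^bsub>G\<^esub> (N n)" "c' \<in> rcosets\<^bsub>G\<^esub> (N m)" for n m c c'
  proof -
    have "Cyl n c \<in> Cyls" "Cyl m c' \<in> Cyls" "{} \<in> Cyls"
      using that by (auto simp: Cyls_def)
    moreover have "Cyl n c \<inter> Cyl m c' \<in> {Cyl n c, {}} \<or> Cyl n c \<inter> Cyl m c' \<in> {Cyl m c', {}}"
      using Cyl_Int_Cyl[of m n c c'] Cyl_Int_Cyl[of n m c' c] that
      by (cases "m \<le> n") (simp_all add: Int_commute)
    ultimately show ?thesis by auto
  qed
  fix a b assume a: "a \<in> Cyls" and b: "b \<in> Cyls"
  then have "a \<subseteq> Zs" "b \<subseteq> Zs" "{} \<in> Cyls"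
    using Cyls_subset_Pow by (auto simp: Cyls_def)
  with Cyls_cases[OF a] Cyls_cases[OF b] a b Cyl_Int show "a \<inter> b \<in> Cyls"
    by (metis Int_absorb1 Int_absorb2 Int_empty_left Int_empty_right)
qed

lemma countable_Cyls: "countable Cyls"
proof -
  have "countable (Cyl n ` (rcosets\<^bsub>G\<^esub> (N n)))" if "n \<in> {1..}" for n
    using finite_rcosets_N that by (intro countable_finite finite_imageI) auto
  then have "countable (\<Union>n\<in>{1..}. Cyl n ` (rcosets\<^bsub>G\<^esub> (N n)))"
    by (rule countable_UN[OF countableI_type])
  then show ?thesis
    unfolding Cyls_def by simp
qed

lemma singleton_in_Zsigma:
  assumes "z \<in> Zs"
  shows "{z} \<in> sets Zsigma"
proof -
  have "{z} = (\<Inter>n\<in>{1..}. Cyl n (z n))"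
    using assms Zset_eqI by (auto simp: Cyl_def)
  also have "\<dots> \<in> sets Zsigma"
    by (intro sets.countable_INT') (auto intro: Cyl_in_Zsigma)
  finally show ?thesis .
qed

lemma countable_in_Zsigma: "countable C \<Longrightarrow> C \<subseteq> Zs \<Longrightarrow> C \<in> sets Zsigma"
  using sets.countable_UN'[of C "\<lambda>z. {z}" Zsigma] singleton_in_Zsigma by auto

text \<open>Haar measure on \<open>Z\<close> is built from independent uniform choices in transversals:
  \<open>Tr i\<close> is a transversal of \<open>N i\<close> in \<open>N' (i - 1)\<close>, where \<open>N' 0 = \<Gamma>\<close>, so that
  as \<open>t\<close> ranges over \<open>\<Pi>\<^sub>E i\<in>{1..n}. Tr i\<close>, the product \<open>tprod t n = t n \<otimes> \<dots> \<otimes> t 1\<close>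
  meets every coset of \<open>N n\<close> exactly once.\<close>

definition N' :: "nat \<Rightarrow> word set" where
  "N' j = (if j = 0 then carrier G else N j)"

definition rep :: "nat \<Rightarrow> word \<Rightarrow> word" where
  "rep i u = (SOME t. t \<in> N i #>\<^bsub>G\<^esub> u)"

definition Tr :: "nat \<Rightarrow> word set" where
  "Tr i = (if i = 0 then {\<one>\<^bsub>G\<^esub>} else rep i ` N' (i - 1))"

lemma N'_subgroup: "subgroup (N' j) G"
  by (simp add: N'_def N_subgroup G.subgroup_self)

lemma N_subset_N':
  assumes "i \<ge> 1"
  shows "N i \<subseteq> N' (i - 1)"
proof (cases "i = 1")
  case True
  then show ?thesis
    using subgroup.subset[OF N_subgroup, of 1] by (simp add: N'_def)
next
  case False
  then obtain j where "i = Suc j" "j \<ge> 1"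
    using assms by (cases i) auto
  then show ?thesis
    using N_Suc_psubset[of j] by (auto simp: N'_def)
qed

lemma rep_mem: "i \<ge> 1 \<Longrightarrow> u \<in> carrier G \<Longrightarrow> rep i u \<in> N i #>\<^bsub>G\<^esub> u"
  unfolding rep_def by (rule someI[of _ u]) (rule G.rcos_self[OF _ N_subgroup])

lemma rcos_rep: "i \<ge> 1 \<Longrightarrow> u \<in> carrier G \<Longrightarrow> N i #>\<^bsub>G\<^esub> rep i u = N i #>\<^bsub>G\<^esub> u"
  using G.repr_independence[OF rep_mem _ N_subgroup] by simp

lemma Tr_subset_N': "i \<ge> 1 \<Longrightarrow> Tr i \<subseteq> N' (i - 1)"
proof
  fix t assume i: "i \<ge> 1" and "t \<in> Tr i"
  then obtain u where u: "u \<in> N' (i - 1)" "t = rep i u"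
    by (auto simp: Tr_def)
  then have "t \<in> N i #>\<^bsub>G\<^esub> u"
    using i rep_mem subgroup.mem_carrier[OF N'_subgroup] by blast
  then obtain h where "h \<in> N i" "t = h \<otimes>\<^bsub>G\<^esub> u"
    by (auto simp: r_coset_def)
  then show "t \<in> N' (i - 1)"
    using N_subset_N'[OF i] u(1) subgroup.m_closed[OF N'_subgroup] by blast
qed

lemma Tr_subset_carrier: "Tr i \<subseteq> carrier G"
  using Tr_subset_N'[of i] subgroup.subset[OF N'_subgroup] by (cases "i = 0") (auto simp: Tr_def)

lemma finite_Tr: "finite (Tr i)"
proof (cases "i = 0")
  case False
  then have "Tr i \<subseteq> (\<lambda>c. SOME t. t \<in> c) ` (rcosets\<^bsub>G\<^esub> (N i))"
    using subgroup.mem_carrier[OF N'_subgroup] G.rcosetsI[OF subgroup.subset[OF N_subgroup]]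
    by (auto simp: Tr_def rep_def)
  then show ?thesis
    using finite_surj[OF finite_rcosets_N[of i]] False by simp
qed (simp add: Tr_def)

lemma Tr_nonempty: "Tr i \<noteq> {}"
  using subgroup.one_closed[OF N'_subgroup] by (auto simp: Tr_def)

lemma Tr_represents:
  assumes "i \<ge> 1" "u \<in> N' (i - 1)"
  shows "\<exists>t\<in>Tr i. N i #>\<^bsub>G\<^esub> t = N i #>\<^bsub>G\<^esub> u"
  using assms rcos_rep subgroup.mem_carrier[OF N'_subgroup] by (auto simp: Tr_def)

lemma Tr_inj:
  assumes "i \<ge> 1" "t \<in> Tr i" "t' \<in> Tr i" "N i #>\<^bsub>G\<^esub> t = N i #>\<^bsub>G\<^esub> t'"
  shows "t = t'"
proof -
  obtain u u' where "u \<in> N' (i - 1)" "t = rep i u" "u' \<in> N' (i - 1)" "t' = rep i u'"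
    using assms(1-3) by (auto simp: Tr_def)
  moreover have "u \<in> carrier G" "u' \<in> carrier G"
    using calculation subgroup.mem_carrier[OF N'_subgroup] by auto
  ultimately show ?thesis
    using assms(1,4) rcos_rep by (simp add: rep_def)
qed

lemma card_Tr_ge_2:
  assumes "i \<ge> 2"
  shows "card (Tr i) \<ge> 2"
proof -
  obtain j where "i = Suc j" "j \<ge> 1"
    using assms by (cases i) auto
  then obtain u where u: "u \<in> N (i - 1)" "u \<notin> N i"
    using N_Suc_psubset[of j] by auto
  have uN': "u \<in> N' (i - 1)" and u_carrier: "u \<in> carrier G"
    using u(1) \<open>i = Suc j\<close> \<open>j \<ge> 1\<close> subgroup.mem_carrier[OF N_subgroup] by (auto simp: N'_def)
  obtain t1 where t1: "t1 \<in> Tr i" "N i #>\<^bsub>G\<^esub> t1 = N i #>\<^bsub>G\<^esub> \<one>\<^bsub>G\<^esub>"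
    using Tr_represents[OF _ subgroup.one_closed[OF N'_subgroup], of i] assms by auto
  obtain t2 where t2: "t2 \<in> Tr i" "N i #>\<^bsub>G\<^esub> t2 = N i #>\<^bsub>G\<^esub> u"
    using Tr_represents[OF _ uN'] assms by force
  have "N i #>\<^bsub>G\<^esub> u \<noteq> N i"
    using G.coset_join1[OF _ u_carrier N_subgroup] u(2) assms by auto
  then have "t1 \<noteq> t2"
    using t1(2) t2(2) subgroup.subset[OF N_subgroup] assms by auto
  then have "card {t1, t2} = 2"
    by simp
  then show ?thesis
    using card_mono[OF finite_Tr, of "{t1, t2}"] t1(1) t2(1) by simp
qed

primrec tprod :: "(nat \<Rightarrow> word) \<Rightarrow> nat \<Rightarrow> word" where
  "tprod t 0 = \<one>\<^bsub>G\<^esub>"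
| "tprod t (Suc n) = t (Suc n) \<otimes>\<^bsub>G\<^esub> tprod t n"

lemma tprod_cong: "(\<And>i. i \<in> {1..n} \<Longrightarrow> t i = t' i) \<Longrightarrow> tprod t n = tprod t' n"
  by (induction n) auto

lemma tprod_carrier: "(\<And>i. i \<in> {1..n} \<Longrightarrow> t i \<in> carrier G) \<Longrightarrow> tprod t n \<in> carrier G"
  by (induction n) auto

lemma tprod_carrier_Tr: "t \<in> Pi\<^sub>E {1..n} Tr \<Longrightarrow> tprod t n \<in> carrier G"
  by (intro tprod_carrier) (auto simp: PiE_iff intro: subsetD[OF Tr_subset_carrier])

lemma tprod_represents:
  assumes "g \<in> carrier G"
  shows "\<exists>t\<in>Pi\<^sub>E {1..n} Tr. N' n #>\<^bsub>G\<^esub> tprod t n = N' n #>\<^bsub>G\<^esub> g"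
proof (induction n)
  case 0
  have "N' 0 #>\<^bsub>G\<^esub> x = carrier G" if "x \<in> carrier G" for x
    using G.coset_join2[OF that G.subgroup_self that] by (simp add: N'_def)
  then show ?case
    using assms by (intro bexI[of _ "\<lambda>_. undefined"]) auto
next
  case (Suc n)
  then obtain t where t: "t \<in> Pi\<^sub>E {1..n} Tr" "N' n #>\<^bsub>G\<^esub> tprod t n = N' n #>\<^bsub>G\<^esub> g"
    by blast
  let ?p = "tprod t n" and ?u = "g \<otimes>\<^bsub>G\<^esub> inv\<^bsub>G\<^esub> tprod t n"
  have p: "?p \<in> carrier G"
    using tprod_carrier_Tr[OF t(1)] .
  have "g \<in> N' n #>\<^bsub>G\<^esub> ?p"
    using t(2) G.rcos_self[OF assms N'_subgroup] by simp
  then have "?u \<in> N' n"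
    using subgroup.rcos_module_imp[OF N'_subgroup G.is_group p] by blast
  then obtain \<tau> where \<tau>: "\<tau> \<in> Tr (Suc n)" "N (Suc n) #>\<^bsub>G\<^esub> \<tau> = N (Suc n) #>\<^bsub>G\<^esub> ?u"
    using Tr_represents[of "Suc n"] by auto
  define t' where "t' = t(Suc n := \<tau>)"
  have "t' \<in> Pi\<^sub>E {1..Suc n} Tr"
    using t(1) \<tau>(1) by (auto simp: t'_def PiE_iff extensional_def)
  have "tprod t' (Suc n) = \<tau> \<otimes>\<^bsub>G\<^esub> ?p"
    using tprod_cong[of n t' t] by (simp add: t'_def)
  also have "N (Suc n) #>\<^bsub>G\<^esub> (\<tau> \<otimes>\<^bsub>G\<^esub> ?p) = N (Suc n) #>\<^bsub>G\<^esub> (?u \<otimes>\<^bsub>G\<^esub> ?p)"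
    using \<tau> Tr_subset_carrier p assms
    by (subst G.rcos_mult_right_cancel[OF N_subgroup]) auto
  also have "?u \<otimes>\<^bsub>G\<^esub> ?p = g"
    using p assms by (simp add: G.m_assoc)
  finally have "N' (Suc n) #>\<^bsub>G\<^esub> tprod t' (Suc n) = N' (Suc n) #>\<^bsub>G\<^esub> g"
    by (simp add: N'_def)
  with \<open>t' \<in> Pi\<^sub>E {1..Suc n} Tr\<close> show ?case
    by blast
qed

lemma tprod_inj:
  assumes "s \<in> Pi\<^sub>E {1..n} Tr" "s' \<in> Pi\<^sub>E {1..n} Tr"
    and "N' n #>\<^bsub>G\<^esub> tprod s n = N' n #>\<^bsub>G\<^esub> tprod s' n"
  shows "s = s'"
  using assms
proof (induction n arbitrary: s s')
  case (Suc n)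
  let ?a = "s (Suc n)" and ?b = "s' (Suc n)"
  define s0 where "s0 = restrict s {1..n}"
  define s0' where "s0' = restrict s' {1..n}"
  have s0: "s0 \<in> Pi\<^sub>E {1..n} Tr" "s0' \<in> Pi\<^sub>E {1..n} Tr"
    using Suc.prems(1,2) by (auto simp: s0_def s0'_def PiE_iff)
  have p: "tprod s n = tprod s0 n" "tprod s' n = tprod s0' n"
    by (auto intro: tprod_cong simp: s0_def s0'_def)
  have ab: "?a \<in> Tr (Suc n)" "?b \<in> Tr (Suc n)"
    using Suc.prems(1,2) by auto
  then have ab_N': "?a \<in> N' n" "?b \<in> N' n"
    using Tr_subset_N'[of "Suc n"] by auto
  have carrier: "?a \<in> carrier G" "?b \<in> carrier G" "tprod s0 n \<in> carrier G" "tprod s0' n \<in> carrier G"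
    using ab Tr_subset_carrier tprod_carrier_Tr[OF s0(1)] tprod_carrier_Tr[OF s0(2)] by auto
  have eq: "N (Suc n) #>\<^bsub>G\<^esub> (?a \<otimes>\<^bsub>G\<^esub> tprod s0 n) = N (Suc n) #>\<^bsub>G\<^esub> (?b \<otimes>\<^bsub>G\<^esub> tprod s0' n)"
    using Suc.prems(3) p by (simp add: N'_def)
  then have "N' n #>\<^bsub>G\<^esub> (?a \<otimes>\<^bsub>G\<^esub> tprod s0 n) = N' n #>\<^bsub>G\<^esub> (?b \<otimes>\<^bsub>G\<^esub> tprod s0' n)"
    using N_subset_N'[of "Suc n"] carrier
    by (intro G.rcos_eq_mono[OF N_subgroup N'_subgroup]) auto
  then have "N' n #>\<^bsub>G\<^esub> tprod s0 n = N' n #>\<^bsub>G\<^esub> tprod s0' n"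
    using ab_N' carrier by (simp add: G.rcos_mult_absorb[OF N'_subgroup])
  then have "s0 = s0'"
    using Suc.IH[OF s0] by blast
  then have "N (Suc n) #>\<^bsub>G\<^esub> (?a \<otimes>\<^bsub>G\<^esub> tprod s0 n) = N (Suc n) #>\<^bsub>G\<^esub> (?b \<otimes>\<^bsub>G\<^esub> tprod s0 n)"
    using eq by simp
  then have "N (Suc n) #>\<^bsub>G\<^esub> ?a = N (Suc n) #>\<^bsub>G\<^esub> ?b"
    using G.rcos_mult_right_cancel[OF N_subgroup[of "Suc n"] carrier(1-3)] by simp
  then have "?a = ?b"
    using Tr_inj[OF _ ab] by simp
  show ?case
  proof (rule extensionalityI[of s "{1..Suc n}"])
    show "s \<in> extensional {1..Suc n}" "s' \<in> extensional {1..Suc n}"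
      using Suc.prems(1,2) by (simp_all add: PiE_def)
    fix i assume "i \<in> {1..Suc n}"
    then consider "i \<in> {1..n}" | "i = Suc n"
      by fastforce
    then show "s i = s' i"
    proof cases
      case 1
      moreover have "s0 i = s0' i"
        using \<open>s0 = s0'\<close> by simp
      ultimately show ?thesis
        by (simp add: s0_def s0'_def)
    qed (use \<open>?a = ?b\<close> in simp)
  qed
qed simp

definition Omega :: "(nat \<Rightarrow> word) measure" where
  "Omega = PiM UNIV (\<lambda>i. uniform_count_measure (Tr i))"

definition coset_seq :: "(nat \<Rightarrow> word) \<Rightarrow> nat \<Rightarrow> word set" where
  "coset_seq t n = (if n = 0 then {} else N n #>\<^bsub>G\<^esub> tprod t n)"

definition haar :: "(nat \<Rightarrow> word set) measure" where
  "haar = distr Omega Zsigma coset_seq"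

definition cyl_mass :: "nat \<Rightarrow> real" where
  "cyl_mass n = (\<Prod>i\<in>{1..n}. 1 / real (card (Tr i)))"

lemma space_Omega: "space Omega = Pi\<^sub>E UNIV Tr"
  by (simp add: Omega_def space_PiM space_uniform_count_measure)

lemma prob_space_Omega: "prob_space Omega"
  unfolding Omega_def
  by (rule prob_space_PiM) (simp add: prob_space_uniform_count_measure finite_Tr Tr_nonempty)

lemma Omega_tprod_carrier: "t \<in> space Omega \<Longrightarrow> tprod t n \<in> carrier G"
  using Tr_subset_carrier by (intro tprod_carrier) (auto simp: space_Omega)

lemma coset_seq_in_Zset:
  assumes t: "t \<in> space Omega"
  shows "coset_seq t \<in> Zs"
proof -
  have "coset_seq t (Suc n) \<subseteq> coset_seq t n" if n: "n \<ge> 1" for n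
  proof
    fix x assume "x \<in> coset_seq t (Suc n)"
    then obtain h where h: "h \<in> N (Suc n)" "x = h \<otimes>\<^bsub>G\<^esub> (t (Suc n) \<otimes>\<^bsub>G\<^esub> tprod t n)"
      by (auto simp: coset_seq_def r_coset_def)
    have "t (Suc n) \<in> N n"
      using Tr_subset_N'[of "Suc n"] t n by (auto simp: space_Omega N'_def)
    moreover have "h \<in> N n"
      using h(1) N_Suc_psubset[OF n] by auto
    ultimately have "h \<otimes>\<^bsub>G\<^esub> t (Suc n) \<in> N n"
      using subgroup.m_closed[OF N_subgroup[OF n]] by blast
    moreover have "x = (h \<otimes>\<^bsub>G\<^esub> t (Suc n)) \<otimes>\<^bsub>G\<^esub> tprod t n"
      using h \<open>h \<in> N n\<close> \<open>t (Suc n) \<in> N n\<close> subgroup.mem_carrier[OF N_subgroup[OF n]]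
        Omega_tprod_carrier[OF t] by (simp add: G.m_assoc)
    ultimately show "x \<in> coset_seq t n"
      using n G.rcosI[OF _ subgroup.subset[OF N_subgroup[OF n]] Omega_tprod_carrier[OF t]]
      by (simp add: coset_seq_def)
  qed
  moreover have "coset_seq t n \<in> rcosets\<^bsub>G\<^esub> (N n)" if "n \<ge> 1" for n
    using that G.rcosetsI[OF subgroup.subset[OF N_subgroup] Omega_tprod_carrier[OF t]]
    by (simp add: coset_seq_def)
  ultimately show ?thesis
    by (simp add: Zset_def coset_seq_def)
qed

lemma measurable_component_Omega: "(\<lambda>t. t i) \<in> measurable Omega (count_space UNIV)"
proof -
  have "(\<lambda>t. t i) \<in> measurable Omega (uniform_count_measure (Tr i))"
    unfolding Omega_def by (rule measurable_component_singleton) simp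
  moreover have "(\<lambda>x. x) \<in> measurable (uniform_count_measure (Tr i)) (count_space UNIV)"
    by (subst measurable_cong_sets[OF sets_uniform_count_measure_count_space refl]) simp
  ultimately show ?thesis
    using measurable_compose by blast
qed

lemma measurable_tprod: "(\<lambda>t. tprod t n) \<in> measurable Omega (count_space UNIV)"
proof (induction n)
  case (Suc n)
  have "(\<lambda>t. (t (Suc n), tprod t n)) \<in> measurable Omega (count_space UNIV \<Otimes>\<^sub>M count_space UNIV)"
    by (rule measurable_Pair[OF measurable_component_Omega Suc.IH])
  then have "(\<lambda>t. (t (Suc n), tprod t n)) \<in> measurable Omega (count_space UNIV)"
    by (simp add: pair_measure_countable)
  moreover have "(\<lambda>p. fst p \<otimes>\<^bsub>G\<^esub> snd p) \<in> measurable (count_space UNIV) (count_space UNIV)"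
    by simp
  ultimately show ?case
    using measurable_compose[of "\<lambda>t. (t (Suc n), tprod t n)" Omega "count_space UNIV"
        "\<lambda>p. fst p \<otimes>\<^bsub>G\<^esub> snd p"] by simp
qed simp

lemma measurable_coset_seq: "coset_seq \<in> measurable Omega Zsigma"
  unfolding Zsigma_def
proof (rule measurable_measure_of[OF Cyls_subset_Pow])
  show "coset_seq \<in> space Omega \<rightarrow> Zs"
    using coset_seq_in_Zset by blast
next
  fix A assume "A \<in> Cyls"
  then show "coset_seq -` A \<inter> space Omega \<in> sets Omega"
  proof (cases rule: Cyls_cases)
    case 2
    then have "coset_seq -` A \<inter> space Omega = space Omega"
      using coset_seq_in_Zset by auto
    then show ?thesis by simp
  next
    case (3 n c)
    then have "coset_seq -` A \<inter> space Omega = (\<lambda>t. tprod t n) -` {g. N n #>\<^bsub>G\<^esub> g = c} \<inter> space Omega"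
      using coset_seq_in_Zset by (auto simp: Cyl_def coset_seq_def)
    then show ?thesis
      using measurable_sets[OF measurable_tprod[of n], of "{g. N n #>\<^bsub>G\<^esub> g = c}"] by simp
  qed simp
qed

lemma prob_space_haar: "prob_space haar"
  unfolding haar_def by (rule prob_space.prob_space_distr[OF prob_space_Omega measurable_coset_seq])

lemma sets_haar [measurable_cong]: "sets haar = sets Zsigma"
  by (simp add: haar_def)

lemma space_haar [simp]: "space haar = Zs"
  by (simp add: haar_def)

lemma coset_seq_preimage_Cyl:
  assumes n: "n \<ge> 1" and t: "t \<in> Pi\<^sub>E {1..n} Tr"
  shows "coset_seq -` Cyl n (N n #>\<^bsub>G\<^esub> tprod t n) \<inter> space Omega
    = prod_emb UNIV (\<lambda>i. uniform_count_measure (Tr i)) {1..n} (Pi\<^sub>E {1..n} (\<lambda>i. {t i}))"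
    (is "?L = ?R")
proof (intro equalityI subsetI)
  fix s assume "s \<in> ?L"
  then have s: "s \<in> space Omega" "N n #>\<^bsub>G\<^esub> tprod s n = N n #>\<^bsub>G\<^esub> tprod t n"
    using n by (auto simp: Cyl_def coset_seq_def)
  have "restrict s {1..n} \<in> Pi\<^sub>E {1..n} Tr"
    using s(1) by (auto simp: space_Omega)
  moreover have "tprod (restrict s {1..n}) n = tprod s n"
    by (rule tprod_cong) simp
  ultimately have "restrict s {1..n} = t"
    using tprod_inj[OF _ t] s(2) n by (simp add: N'_def)
  then show "s \<in> ?R"
    using s(1) by (auto simp: prod_emb_def space_Omega space_uniform_count_measure PiE_iff)
next
  fix s assume "s \<in> ?R"
  then have s: "s \<in> space Omega" "\<And>i. i \<in> {1..n} \<Longrightarrow> s i = t i"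
    by (auto simp: prod_emb_def space_uniform_count_measure space_Omega PiE_iff)
  have "tprod s n = tprod t n"
    using s(2) by (rule tprod_cong)
  then show "s \<in> ?L"
    using coset_seq_in_Zset[OF s(1)] s(1) n by (simp add: Cyl_def coset_seq_def)
qed

lemma emeasure_haar_Cyl:
  assumes n: "n \<ge> 1" and c: "c \<in> rcosets\<^bsub>G\<^esub> (N n)"
  shows "emeasure haar (Cyl n c) = cyl_mass n"
proof -
  obtain g where g: "g \<in> carrier G" "c = N n #>\<^bsub>G\<^esub> g"
    using c by (auto simp: RCOSETS_def)
  then obtain t where t: "t \<in> Pi\<^sub>E {1..n} Tr" "c = N n #>\<^bsub>G\<^esub> tprod t n"
    using tprod_represents[OF g(1), of n] n by (auto simp: N'_def)
  let ?M = "\<lambda>i. uniform_count_measure (Tr i)"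
  have tT: "\<And>i. i \<in> {1..n} \<Longrightarrow> t i \<in> Tr i"
    using t(1) by (auto simp: PiE_iff)
  have "emeasure haar (Cyl n c) = emeasure Omega (coset_seq -` Cyl n c \<inter> space Omega)"
    unfolding haar_def by (rule emeasure_distr[OF measurable_coset_seq Cyl_in_Zsigma[OF n]])
  also have "\<dots> = emeasure Omega (prod_emb UNIV ?M {1..n} (Pi\<^sub>E {1..n} (\<lambda>i. {t i})))"
    using coset_seq_preimage_Cyl[OF n t(1)] t(2) by simp
  also have "\<dots> = (\<Prod>i\<in>{1..n}. emeasure (?M i) {t i})"
    unfolding Omega_def
    by (intro emeasure_PiM_emb) (auto simp: prob_space_uniform_count_measure finite_Tr Tr_nonempty tT)
  also have "\<dots> = (\<Prod>i\<in>{1..n}. ennreal (1 / real (card (Tr i))))"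
    by (intro prod.cong) (auto simp: emeasure_uniform_count_measure finite_Tr tT)
  also have "\<dots> = cyl_mass n"
    unfolding cyl_mass_def by (rule prod_ennreal) simp
  finally show ?thesis .
qed

lemma cyl_mass_nonneg: "cyl_mass n \<ge> 0"
  by (simp add: cyl_mass_def prod_nonneg)

lemma cyl_mass_le: "cyl_mass (Suc n) \<le> (1 / 2) ^ n"
proof (induction n)
  case 0
  have "card (Tr 1) \<ge> 1"
    using finite_Tr Tr_nonempty by (simp add: Suc_le_eq card_gt_0_iff)
  then show ?case
    by (simp add: cyl_mass_def)
next
  case (Suc n)
  have "1 / real (card (Tr (Suc (Suc n)))) \<le> 1 / 2"
    using card_Tr_ge_2[of "Suc (Suc n)"] by (simp add: field_simps)
  then have "cyl_mass (Suc n) * (1 / real (card (Tr (Suc (Suc n))))) \<le> (1 / 2) ^ n * (1 / 2)"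
    using Suc.IH cyl_mass_nonneg by (intro mult_mono) auto
  then show ?case
    by (simp add: cyl_mass_def atLeastAtMostSuc_conv mult.commute)
qed

lemma haar_singleton_null:
  assumes z: "z \<in> Zs"
  shows "{z} \<in> null_sets haar"
proof -
  interpret prob_space haar
    by (rule prob_space_haar)
  have "measure haar {z} \<le> (1 / 2) ^ m" for m
  proof -
    have "measure haar {z} \<le> measure haar (Cyl (Suc m) (z (Suc m)))"
      using z Cyl_in_Zsigma[of "Suc m"] by (intro finite_measure_mono) (auto simp: Cyl_def sets_haar)
    also have "\<dots> = cyl_mass (Suc m)"
      using emeasure_haar_Cyl[of "Suc m"] Zset_rcosets[OF z] cyl_mass_nonneg by (simp add: measure_def)
    finally show ?thesis
      using cyl_mass_le order_trans by blast
  qed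
  then have "measure haar {z} \<le> 0"
    by (intro LIMSEQ_le_const[OF LIMSEQ_power_zero[of "1 / 2 :: real"]]) auto
  then show ?thesis
    using singleton_in_Zsigma[OF z] emeasure_eq_measure measure_nonneg[of haar "{z}"]
    by (simp add: null_sets_def)
qed

lemma haar_countable_null: "countable C \<Longrightarrow> C \<subseteq> Zs \<Longrightarrow> C \<in> null_sets haar"
  using null_sets_UN'[of C "\<lambda>z. {z}" haar] haar_singleton_null by auto

lemma measure_haar_Cyl:
  assumes n: "n \<ge> 1" and c: "c \<in> rcosets\<^bsub>G\<^esub> (N n)"
  shows "measure haar (Cyl n c) = 1 / card (rcosets\<^bsub>G\<^esub> (N n))"
proof -
  interpret prob_space haar
    by (rule prob_space_haar)
  have mass: "measure haar (Cyl n c') = cyl_mass n" if "c' \<in> rcosets\<^bsub>G\<^esub> (N n)" for c'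
    using emeasure_haar_Cyl[OF n that] cyl_mass_nonneg by (simp add: measure_def)
  have "cyl_mass n = 1 / card (rcosets\<^bsub>G\<^esub> (N n))"
  proof (rule prob_equal_on_finite_partition[OF finite_rcosets_N[OF n]])
    show "disjoint_family_on (Cyl n) (rcosets\<^bsub>G\<^esub> (N n))"
      by (auto simp: disjoint_family_on_def Cyl_def)
    show "(\<Union>c\<in>rcosets\<^bsub>G\<^esub> (N n). Cyl n c) = space haar"
      using Zset_rcosets n by (auto simp: Cyl_def)
    show "Cyl n ` (rcosets\<^bsub>G\<^esub> (N n)) \<subseteq> events"
      using Cyl_in_Zsigma[OF n] by (auto simp: sets_haar)
  qed (use mass in blast)
  then show ?thesis
    using mass[OF c] by simp
qed

lemma haar_eqI:
  assumes "sets M = sets Zsigma" "prob_space M"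
    and "\<And>n c. n \<ge> 1 \<Longrightarrow> c \<in> rcosets\<^bsub>G\<^esub> (N n) \<Longrightarrow> emeasure M (Cyl n c) = emeasure haar (Cyl n c)"
  shows "M = haar"
proof -
  have space: "space M = Zs"
    using sets_eq_imp_space_eq[OF assms(1)] by simp
  have eq: "emeasure M A = emeasure haar A" if "A \<in> Cyls" for A
    using that
  proof (cases rule: Cyls_cases)
    case 2
    then show ?thesis
      using prob_space.emeasure_space_1[OF assms(2)] prob_space.emeasure_space_1[OF prob_space_haar]
        space by simp
  qed (simp_all add: assms(3))
  show ?thesis
  proof (rule measure_eqI_generator_eq_countable[OF Int_stable_Cyls Cyls_subset_Pow eq])
    show "sets M = sigma_sets Zs Cyls" "sets haar = sigma_sets Zs Cyls"
      by (simp_all add: assms(1) sets_Zsigma sets_haar)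
    show "{Zs} \<subseteq> Cyls" "\<Union>{Zs} = Zs" "countable {Zs}"
      by (simp_all add: Cyls_def)
    show "emeasure M a \<noteq> \<infinity>" if "a \<in> {Zs}" for a
      using that prob_space.emeasure_space_1[OF assms(2)] space by simp
  qed
qed

lemma actZ_preimage_Cyl:
  assumes w: "w \<in> carrier G" and n: "n \<ge> 1" and c: "c \<subseteq> carrier G"
  shows "actZ r w -` Cyl n c \<inter> Zs = Cyl n (inv\<^bsub>G\<^esub> w <#\<^bsub>G\<^esub> c)"
proof -
  have "w <#\<^bsub>G\<^esub> z n = c \<longleftrightarrow> z n = inv\<^bsub>G\<^esub> w <#\<^bsub>G\<^esub> c" if z: "z \<in> Zs" for z
  proof
    assume "w <#\<^bsub>G\<^esub> z n = c"
    then show "z n = inv\<^bsub>G\<^esub> w <#\<^bsub>G\<^esub> c"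
      using G.lcos_inv_cancel[OF w rcosets_N_subset[OF n Zset_rcosets[OF z n]]] by simp
  next
    assume "z n = inv\<^bsub>G\<^esub> w <#\<^bsub>G\<^esub> c"
    then show "w <#\<^bsub>G\<^esub> z n = c"
      using G.lcos_inv_cancel[OF G.inv_closed[OF w] c] w by simp
  qed
  then show ?thesis
    using actZ_in_Zset[OF w] n by (auto simp: Cyl_def actZ_def)
qed

lemma actZ_preimage_Zset: "w \<in> carrier G \<Longrightarrow> actZ r w -` Zs \<inter> Zs = Zs"
  using actZ_in_Zset by auto

lemma measurable_actZ:
  assumes w: "w \<in> carrier G"
  shows "actZ r w \<in> measurable Zsigma Zsigma"
proof (rule measurable_sigma_sets[OF sets_Zsigma Cyls_subset_Pow])
  show "actZ r w \<in> space Zsigma \<rightarrow> Zs"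
    using actZ_in_Zset[OF w] by auto
  fix A assume "A \<in> Cyls"
  then show "actZ r w -` A \<inter> space Zsigma \<in> sets Zsigma"
  proof (cases rule: Cyls_cases)
    case (3 n c)
    then show ?thesis
      using actZ_preimage_Cyl[OF w 3(1) rcosets_N_subset[OF 3(1,2)]] Cyl_in_Zsigma by simp
  qed (use actZ_preimage_Zset[OF w] sets.top[of Zsigma] in simp_all)
qed

lemma haar_invariant:
  assumes w: "w \<in> carrier G"
  shows "distr haar Zsigma (actZ r w) = haar"
proof (rule haar_eqI)
  have meas: "actZ r w \<in> measurable haar Zsigma"
    using measurable_actZ[OF w] by (simp add: measurable_cong_sets[OF sets_haar refl])
  then show "prob_space (distr haar Zsigma (actZ r w))"
    by (rule prob_space.prob_space_distr[OF prob_space_haar])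
  fix n c assume n: "n \<ge> 1" and c: "c \<in> rcosets\<^bsub>G\<^esub> (N n)"
  have "emeasure (distr haar Zsigma (actZ r w)) (Cyl n c) = emeasure haar (actZ r w -` Cyl n c \<inter> Zs)"
    using emeasure_distr[OF meas Cyl_in_Zsigma[OF n]] by simp
  also have "\<dots> = emeasure haar (Cyl n c)"
    using actZ_preimage_Cyl[OF w n rcosets_N_subset[OF n c]]
      normal.lcos_rcosets[OF N_normal[OF n] G.inv_closed[OF w] c] c n
    by (simp add: emeasure_haar_Cyl)
  finally show "emeasure (distr haar Zsigma (actZ r w)) (Cyl n c) = emeasure haar (Cyl n c)" .
qed simp

end

section \<open>The RIM of the McMahon extension\<close>

locale mcmahon_setting = profinite_completion +
  fixes \<gamma> :: "nat \<Rightarrow> word" and \<phi> :: "word \<Rightarrow> 'x::topological_space \<Rightarrow> 'x" and \<pi> :: "'x \<Rightarrow> ptX"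
  assumes r_ge_2: "r \<ge> 2" and mcmahon: "mcmahon_ext r N \<gamma> \<phi> \<pi>"
begin

abbreviation "Ys \<equiv> Yset r"

definition orbit0 :: "ptX set" where
  "orbit0 = (\<lambda>g. actX r g (x0 N)) ` carrier G"

lemma compact_UNIV: "compact (UNIV :: 'x set)"
  using mcmahon by (simp add: mcmahon_ext_def)

lemma continuous_map_pi: "continuous_map euclidean (topX r N) \<pi>"
  using mcmahon by (simp add: mcmahon_ext_def)

lemma pi_in_Xset: "\<pi> q \<in> Xset r N"
  using mcmahon by (auto simp: mcmahon_ext_def)

lemma pi_surj: "p \<in> Xset r N \<Longrightarrow> \<exists>q. \<pi> q = p"
  using mcmahon unfolding mcmahon_ext_def by (metis rangeE)

lemma pi_equivariant: "g \<in> carrier G \<Longrightarrow> \<pi> (\<phi> g q) = actX r g (\<pi> q)"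
  using mcmahon by (simp add: mcmahon_ext_def carrier_G)

lemma card_pi_fibre: "p \<in> Xset r N \<Longrightarrow> p \<notin> orbit0 \<Longrightarrow> card (\<pi> -` {p}) = 1"
  using mcmahon by (simp add: mcmahon_ext_def orbit0_def carrier_G)

lemma phi_one: "\<phi> [] q = q"
  using mcmahon by (simp add: mcmahon_ext_def cont_action_def)

lemma phi_mult: "g \<in> carrier G \<Longrightarrow> h \<in> carrier G \<Longrightarrow> \<phi> (g \<otimes>\<^bsub>G\<^esub> h) q = \<phi> g (\<phi> h q)"
  using mcmahon by (simp add: mcmahon_ext_def cont_action_def carrier_G FG_def)

lemma continuous_phi: "g \<in> carrier G \<Longrightarrow> continuous_on UNIV (\<phi> g)"
  using mcmahon by (simp add: mcmahon_ext_def cont_action_def carrier_G)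

lemma fst_pi_in_Yset: "fst (\<pi> q) \<in> Ys"
  using pi_in_Xset by (auto simp: Xset_def mem_Times_iff)

lemma snd_pi_in_Zset: "snd (\<pi> q) \<in> Zs"
  using pi_in_Xset by (auto simp: Xset_def mem_Times_iff)

lemma continuous_map_fst_pi: "continuous_map euclidean (topY r) (\<lambda>q. fst (\<pi> q))"
  using continuous_map_compose[OF continuous_map_pi[unfolded topX_def] continuous_map_fst] by (simp add: o_def)

lemma continuous_map_snd_pi: "continuous_map euclidean (topZ r N) (\<lambda>q. snd (\<pi> q))"
  using continuous_map_compose[OF continuous_map_pi[unfolded topX_def] continuous_map_snd] by (simp add: o_def)

text \<open>The action laws on \<open>X\<close> are inherited from \<open>X\<^sub>f\<close> through the surjection \<open>\<pi>\<close>.\<close>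

lemma actX_in_Xset: "g \<in> carrier G \<Longrightarrow> p \<in> Xset r N \<Longrightarrow> actX r g p \<in> Xset r N"
  by (metis pi_equivariant pi_in_Xset pi_surj)

lemma actX_mult:
  "g \<in> carrier G \<Longrightarrow> h \<in> carrier G \<Longrightarrow> p \<in> Xset r N \<Longrightarrow> actX r (g \<otimes>\<^bsub>G\<^esub> h) p = actX r g (actX r h p)"
  by (metis pi_equivariant pi_surj phi_mult G.m_closed)

lemma actX_one: "p \<in> Xset r N \<Longrightarrow> actX r [] p = p"
  by (metis pi_equivariant pi_surj phi_one G.one_closed one_G)

lemma actX_inv: "g \<in> carrier G \<Longrightarrow> p \<in> Xset r N \<Longrightarrow> actX r (inv\<^bsub>G\<^esub> g) (actX r g p) = p"
  by (metis actX_mult actX_one G.inv_closed G.l_inv one_G)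

lemma actY_in_Yset: "w \<in> carrier G \<Longrightarrow> y \<in> Ys \<Longrightarrow> actY w y \<in> Ys"
  using actX_in_Xset[of w "(y, eZ N)"] eZ_in_Zset by (simp add: Xset_def actX_def)

lemma x0_in_Xset: "x0 N \<in> Xset r N"
  using eZ_in_Zset r_ge_2 by (simp add: x0_def Xset_def Yset_def a_inf_def gen_a_def linv_def)

lemma orbit0_preimage:
  assumes g: "g \<in> carrier G" and p: "p \<in> Xset r N" and "actX r g p \<in> orbit0"
  shows "p \<in> orbit0"
proof -
  obtain h where h: "h \<in> carrier G" "actX r g p = actX r h (x0 N)"
    using assms(3) by (auto simp: orbit0_def)
  have "p = actX r (inv\<^bsub>G\<^esub> g) (actX r h (x0 N))"
    using actX_inv[OF g p] h(2) by simp
  also have "\<dots> = actX r (inv\<^bsub>G\<^esub> g \<otimes>\<^bsub>G\<^esub> h) (x0 N)"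
    using actX_mult[OF G.inv_closed[OF g] h(1) x0_in_Xset] by simp
  finally show ?thesis
    unfolding orbit0_def using G.m_closed[OF G.inv_closed[OF g] h(1)] by (rule image_eqI)
qed

subsection \<open>Existence\<close>

definition Zorb :: "(nat \<Rightarrow> letter) \<Rightarrow> (nat \<Rightarrow> word set) set" where
  "Zorb y = {z \<in> Zs. (y, z) \<in> orbit0}"

lemma countable_Zorb: "countable (Zorb y)"
proof -
  have "Zorb y \<subseteq> (\<lambda>g. snd (actX r g (x0 N))) ` carrier G"
  proof
    fix z assume "z \<in> Zorb y"
    then obtain g where "g \<in> carrier G" "(y, z) = actX r g (x0 N)"
      by (auto simp: Zorb_def orbit0_def)
    then show "z \<in> (\<lambda>g. snd (actX r g (x0 N))) ` carrier G"
      by (metis image_eqI snd_conv)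
  qed
  moreover have "countable ((\<lambda>g. snd (actX r g (x0 N))) ` carrier G)"
    by (intro countable_image countableI_type)
  ultimately show ?thesis
    by (rule countable_subset)
qed

lemma Zorb_null: "Zorb y \<in> null_sets haar"
  using haar_countable_null[OF countable_Zorb] by (auto simp: Zorb_def)

definition lift :: "(nat \<Rightarrow> letter) \<Rightarrow> (nat \<Rightarrow> word set) \<Rightarrow> 'x" where
  "lift y z = (SOME q. \<pi> q = (y, z))"

lemma pi_lift: "y \<in> Ys \<Longrightarrow> z \<in> Zs \<Longrightarrow> \<pi> (lift y z) = (y, z)"
  unfolding lift_def by (rule someI_ex) (simp add: pi_surj Xset_def)

lemma lift_unique:
  assumes "y \<in> Ys" "z \<in> Zs" "z \<notin> Zorb y" "\<pi> q = (y, z)"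
  shows "q = lift y z"
proof -
  have "card (\<pi> -` {(y, z)}) = 1"
    using assms by (intro card_pi_fibre) (auto simp: Xset_def Zorb_def)
  then obtain a where "\<pi> -` {(y, z)} = {a}"
    using card_1_singletonE by blast
  moreover have "q \<in> \<pi> -` {(y, z)}" "lift y z \<in> \<pi> -` {(y, z)}"
    using assms(4) pi_lift[OF assms(1,2)] by simp_all
  ultimately show ?thesis
    by auto
qed

lemma pi_fibre_nbhd:
  assumes p: "p \<in> Xset r N" and U: "open U" "\<pi> -` {p} \<subseteq> U"
  shows "\<exists>W. openin (topX r N) W \<and> p \<in> W \<and> \<pi> -` W \<subseteq> U"
proof -
  have "compactin euclidean (- U)"
    using compact_Int_closed[OF compact_UNIV, of "- U"] U(1) by (simp add: closed_Compl)
  then have "closedin (topX r N) (\<pi> ` (- U))"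
    using image_compactin[OF _ continuous_map_pi] compactin_imp_closedin[OF Hausdorff_topX] by blast
  then have "openin (topX r N) (Xset r N - \<pi> ` (- U))"
    using openin_diff[OF openin_topspace] by fastforce
  moreover have "p \<notin> \<pi> ` (- U)"
    using U(2) by blast
  ultimately show ?thesis
    using p by (intro exI[of _ "Xset r N - \<pi> ` (- U)"]) blast
qed

lemma lift_continuous:
  assumes y: "y \<in> Ys" and z: "z \<in> Zs" "z \<notin> Zorb y" and U: "open U" "lift y z \<in> U"
  shows "\<exists>k n. n \<ge> 1 \<and> (\<forall>y'\<in>Ys. \<forall>z'\<in>Zs. (\<forall>i<k. y' i = y i) \<longrightarrow> z' n = z n \<longrightarrow> lift y' z' \<in> U)"
proof -
  have fibre: "\<pi> -` {(y, z)} \<subseteq> U"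
    using lift_unique[OF y z] U(2) by auto
  have "(y, z) \<in> Xset r N"
    using y z(1) by (simp add: Xset_def)
  then obtain W where W: "openin (topX r N) W" "(y, z) \<in> W" "\<pi> -` W \<subseteq> U"
    using pi_fibre_nbhd[OF _ U(1) fibre] by blast
  obtain k n where kn: "n \<ge> 1" "\<forall>y'\<in>Ys. \<forall>z'\<in>Zs. (\<forall>i<k. y' i = y i) \<longrightarrow> z' n = z n \<longrightarrow> (y', z') \<in> W"
    using topX_cylinder_nbhd[OF W(1,2)] by blast
  have "lift y' z' \<in> U" if "y' \<in> Ys" "z' \<in> Zs" "\<forall>i<k. y' i = y i" "z' n = z n" for y' z'
  proof -
    have "\<pi> (lift y' z') \<in> W"
      using kn(2) that pi_lift by simp
    then show ?thesis
      using W(3) by blast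
  qed
  then show ?thesis
    using kn(1) by blast
qed

lemma measurable_lift:
  assumes y: "y \<in> Ys"
  shows "lift y \<in> measurable Zsigma borel"
proof (rule borel_measurableI)
  fix U :: "'x set" assume U: "open U"
  let ?S = "lift y -` U \<inter> Zs"
  let ?C = "{C \<in> Cyls. C \<subseteq> ?S}"
  have "?S \<subseteq> \<Union>?C \<union> (?S \<inter> Zorb y)"
  proof
    fix z assume z: "z \<in> ?S"
    show "z \<in> \<Union>?C \<union> (?S \<inter> Zorb y)"
    proof (cases "z \<in> Zorb y")
      case False
      obtain k n where kn: "n \<ge> 1"
        "\<forall>y'\<in>Ys. \<forall>z'\<in>Zs. (\<forall>i<k. y' i = y i) \<longrightarrow> z' n = z n \<longrightarrow> lift y' z' \<in> U"
        using lift_continuous[OF y _ False U] z by blast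
      then have "Cyl n (z n) \<subseteq> ?S"
        using y by (auto simp: Cyl_def)
      moreover have "Cyl n (z n) \<in> Cyls"
        using kn(1) Zset_rcosets z by (auto simp: Cyls_def)
      moreover have "z \<in> Cyl n (z n)"
        using z by (simp add: Cyl_def)
      ultimately show ?thesis
        by blast
    qed (use z in blast)
  qed
  then have S_eq: "?S = \<Union>?C \<union> (?S \<inter> Zorb y)"
    by blast
  have C: "\<Union>?C \<in> sets Zsigma"
  proof (rule sets.countable_Union)
    show "countable ?C"
      by (rule countable_subset[OF _ countable_Cyls]) auto
    show "?C \<subseteq> sets Zsigma"
      by (auto simp: sets_Zsigma)
  qed
  have Zorb: "?S \<inter> Zorb y \<in> sets Zsigma"
    by (rule countable_in_Zsigma) (auto intro: countable_subset[OF _ countable_Zorb])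
  have "?S \<in> sets Zsigma"
    by (subst S_eq) (rule sets.Un[OF C Zorb])
  then show "lift y -` U \<inter> space Zsigma \<in> sets Zsigma"
    by simp
qed

lemma measurable_lift_haar: "y \<in> Ys \<Longrightarrow> lift y \<in> measurable haar borel"
  using measurable_lift measurable_cong_sets[OF sets_haar refl] by blast

definition mu :: "(nat \<Rightarrow> letter) \<Rightarrow> 'x measure" where
  "mu y = distr haar borel (lift y)"

lemma sets_mu [simp]: "sets (mu y) = sets borel"
  by (simp add: mu_def)

lemma prob_space_mu: "y \<in> Ys \<Longrightarrow> prob_space (mu y)"
  unfolding mu_def by (rule prob_space.prob_space_distr[OF prob_space_haar measurable_lift_haar])

lemma closed_fst_pi_fibre: "y \<in> Ys \<Longrightarrow> closed {q. fst (\<pi> q) = y}"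
  using closedin_continuous_map_preimage[OF continuous_map_fst_pi, of "{y}"]
    closedin_Hausdorff_singleton[OF Hausdorff_topY, of y] by simp

lemma msupp_mu:
  assumes y: "y \<in> Ys"
  shows "msupp (mu y) \<subseteq> (fst \<circ> \<pi>) -` {y}"
proof -
  let ?V = "- {q. fst (\<pi> q) = y}"
  have "open ?V"
    using closed_fst_pi_fibre[OF y] by (simp add: open_Compl)
  moreover have "lift y -` ?V \<inter> space haar = {}"
    using pi_lift[OF y] by auto
  then have "emeasure (mu y) ?V = 0"
    unfolding mu_def using emeasure_distr[OF measurable_lift_haar[OF y], of ?V] \<open>open ?V\<close> by simp
  ultimately show ?thesis
    by (auto simp: msupp_def)
qed

lemma lift_equivariant:
  assumes w: "w \<in> carrier G" and y: "y \<in> Ys" and z: "z \<in> Zs" "z \<notin> Zorb y"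
  shows "lift (actY w y) (actZ r w z) = \<phi> w (lift y z)"
proof -
  have yz: "(y, z) \<in> Xset r N"
    using y z(1) by (simp add: Xset_def)
  have "actZ r w z \<notin> Zorb (actY w y)"
    using orbit0_preimage[OF w yz] z by (auto simp: Zorb_def actX_def)
  moreover have "\<pi> (\<phi> w (lift y z)) = (actY w y, actZ r w z)"
    using pi_equivariant[OF w] pi_lift[OF y z(1)] by (simp add: actX_def)
  ultimately show ?thesis
    using lift_unique[OF actY_in_Yset[OF w y] actZ_in_Zset[OF w z(1)]] by metis
qed

lemma mu_equivariant:
  assumes w: "w \<in> carrier G" and y: "y \<in> Ys"
  shows "mu (actY w y) = distr (mu y) borel (\<phi> w)"
proof -
  let ?y' = "actY w y"
  have y': "?y' \<in> Ys"
    using actY_in_Yset[OF w y] .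
  have meas_phi: "\<phi> w \<in> measurable borel borel"
    using borel_measurable_continuous_onI[OF continuous_phi[OF w]] .
  have meas_actZ: "actZ r w \<in> measurable haar Zsigma"
    using measurable_actZ[OF w] measurable_cong_sets[OF sets_haar refl] by blast
  have "mu ?y' = distr (distr haar Zsigma (actZ r w)) borel (lift ?y')"
    unfolding mu_def using haar_invariant[OF w] by simp
  also have "\<dots> = distr haar borel (lift ?y' \<circ> actZ r w)"
    by (rule distr_distr[OF measurable_lift[OF y'] meas_actZ])
  also have "\<dots> = distr haar borel (\<phi> w \<circ> lift y)"
  proof (rule distr_cong_AE)
    show "AE z in haar. (lift ?y' \<circ> actZ r w) z = (\<phi> w \<circ> lift y) z"
      by (rule AE_I'[OF Zorb_null[of y]]) (use lift_equivariant[OF w y] in fastforce)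
  qed (use measurable_comp[OF meas_actZ measurable_lift[OF y']]
      measurable_comp[OF measurable_lift_haar[OF y] meas_phi] in simp_all)
  also have "\<dots> = distr (mu y) borel (\<phi> w)"
    unfolding mu_def by (rule distr_distr[OF meas_phi measurable_lift_haar[OF y], symmetric])
  finally show ?thesis .
qed

lemma lift_tendsto:
  assumes y0: "y0 \<in> Ys" and z: "z \<in> Zs" "z \<notin> Zorb y0"
    and Y: "\<And>k. Y k \<in> Ys" "\<And>k i. i < k \<Longrightarrow> Y k i = y0 i"
  shows "(\<lambda>k. lift (Y k) z) \<longlonglongrightarrow> lift y0 z"
proof (rule topological_tendstoI)
  fix U assume U: "open U" "lift y0 z \<in> U"
  obtain k n where kn:
    "\<forall>y'\<in>Ys. \<forall>z'\<in>Zs. (\<forall>i<k. y' i = y0 i) \<longrightarrow> z' n = z n \<longrightarrow> lift y' z' \<in> U"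
    using lift_continuous[OF y0 z U] by blast
  have "lift (Y j) z \<in> U" if "j \<ge> k" for j
  proof -
    have "\<forall>i<k. Y j i = y0 i"
      using Y(2) that by simp
    then show ?thesis
      using kn Y(1) z(1) by blast
  qed
  then show "eventually (\<lambda>j. lift (Y j) z \<in> U) sequentially"
    unfolding eventually_sequentially by blast
qed

lemma integral_mu_tendsto:
  assumes g: "continuous_on UNIV (g :: 'x \<Rightarrow> real)" and y0: "y0 \<in> Ys"
    and Y: "\<And>k. Y k \<in> Ys" "\<And>k i. i < k \<Longrightarrow> Y k i = y0 i"
  shows "(\<lambda>k. integral\<^sup>L (mu (Y k)) g) \<longlonglongrightarrow> integral\<^sup>L (mu y0) g"
proof -
  interpret prob_space haar
    by (rule prob_space_haar)
  have g_meas: "g \<in> borel_measurable borel"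
    by (rule borel_measurable_continuous_onI[OF g])
  have integral_mu: "integral\<^sup>L (mu y) g = integral\<^sup>L haar (\<lambda>z. g (lift y z))" if "y \<in> Ys" for y
    unfolding mu_def by (rule integral_distr[OF measurable_lift_haar[OF that] g_meas])
  obtain B where B: "\<And>q. norm (g q) \<le> B"
    using compact_imp_bounded[OF compact_continuous_image[OF g compact_UNIV]]
    unfolding bounded_iff by blast
  have "AE z in haar. (\<lambda>k. g (lift (Y k) z)) \<longlonglongrightarrow> g (lift y0 z)"
  proof (rule AE_I'[OF Zorb_null[of y0]], rule subsetI, rule ccontr)
    fix z assume z: "z \<in> {z \<in> space haar. \<not> (\<lambda>k. g (lift (Y k) z)) \<longlonglongrightarrow> g (lift y0 z)}"
      and "z \<notin> Zorb y0"
    then have "(\<lambda>k. lift (Y k) z) \<longlonglongrightarrow> lift y0 z"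
      using lift_tendsto[OF y0 _ _ Y] by simp
    then have "(\<lambda>k. g (lift (Y k) z)) \<longlonglongrightarrow> g (lift y0 z)"
      using continuous_on_tendsto_compose[OF g] by simp
    with z show False
      by simp
  qed
  then have "(\<lambda>k. integral\<^sup>L haar (\<lambda>z. g (lift (Y k) z))) \<longlonglongrightarrow> integral\<^sup>L haar (\<lambda>z. g (lift y0 z))"
    using B measurable_comp[OF measurable_lift_haar g_meas] y0 Y(1)
    by (intro integral_dominated_convergence[where w = "\<lambda>_. B"]) (auto simp: o_def)
  then show ?thesis
    using integral_mu y0 Y(1) by simp
qed

lemma continuous_integral_mu:
  assumes g: "continuous_on UNIV (g :: 'x \<Rightarrow> real)"
  shows "continuous_map (topY r) euclideanreal (\<lambda>y. integral\<^sup>L (mu y) g)"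
proof (rule continuous_map_topY_realI)
  let ?I = "\<lambda>y. integral\<^sup>L (mu y) g"
  fix y0 and e :: real assume y0: "y0 \<in> Ys" and e: "e > 0"
  show "\<exists>k. \<forall>y\<in>Ys. (\<forall>i<k. y i = y0 i) \<longrightarrow> dist (?I y) (?I y0) < e"
  proof (rule ccontr)
    assume "\<not> ?thesis"
    then obtain Y where Y: "\<And>k. Y k \<in> Ys" "\<And>k i. i < k \<Longrightarrow> Y k i = y0 i"
      "\<And>k. \<not> dist (?I (Y k)) (?I y0) < e"
      by metis
    have "(\<lambda>k. ?I (Y k)) \<longlonglongrightarrow> ?I y0"
      by (rule integral_mu_tendsto[OF g y0 Y(1,2)])
    then have "eventually (\<lambda>k. dist (?I (Y k)) (?I y0) < e) sequentially"
      using tendstoD e by blast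
    then show False
      using Y(3) eventually_sequentially by auto
  qed
qed

lemma mu_is_RIM: "is_RIM r \<phi> (fst \<circ> \<pi>) mu"
  unfolding is_RIM_def
  using prob_space_mu continuous_integral_mu mu_equivariant msupp_mu by (simp add: carrier_G)

subsection \<open>Uniqueness\<close>

definition Acyl :: "nat \<Rightarrow> word set \<Rightarrow> 'x set" where
  "Acyl n c = {q. snd (\<pi> q) n = c}"

lemma open_closed_Acyl: "open (Acyl n c) \<and> closed (Acyl n c)"
proof -
  have "continuous_map euclidean (discrete_topology UNIV) (\<lambda>q. snd (\<pi> q) n)"
    using continuous_map_compose[OF continuous_map_snd_pi continuous_map_topZ_component] by (simp add: o_def)
  then show ?thesis
    using openin_continuous_map_preimage[of _ _ _ "{c}"] closedin_continuous_map_preimage[of _ _ _ "{c}"]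
    by (fastforce simp: Acyl_def)
qed

lemma Acyl_in_borel: "Acyl n c \<in> sets borel"
  using open_closed_Acyl by (simp add: borel_open)

lemma measurable_snd_pi: "(\<lambda>q. snd (\<pi> q)) \<in> measurable borel Zsigma"
proof (rule measurable_sigma_sets[OF sets_Zsigma Cyls_subset_Pow])
  show "(\<lambda>q. snd (\<pi> q)) \<in> space borel \<rightarrow> Zs"
    using snd_pi_in_Zset by simp
  fix B assume "B \<in> Cyls"
  then show "(\<lambda>q. snd (\<pi> q)) -` B \<inter> space borel \<in> sets borel"
  proof (cases rule: Cyls_cases)
    case (3 n c)
    then have "(\<lambda>q. snd (\<pi> q)) -` B \<inter> space borel = Acyl n c"
      using snd_pi_in_Zset by (auto simp: Cyl_def Acyl_def)
    then show ?thesis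
      using Acyl_in_borel by simp
  next
    case 2
    then have "(\<lambda>q. snd (\<pi> q)) -` B \<inter> space borel = UNIV"
      using snd_pi_in_Zset by auto
    then show ?thesis
      by simp
  qed simp
qed

lemma phi_preimage_Acyl:
  assumes w: "w \<in> carrier G" and n: "n \<ge> 1" and c: "c \<subseteq> carrier G"
  shows "\<phi> w -` Acyl n (w <#\<^bsub>G\<^esub> c) = Acyl n c"
proof -
  have "snd (\<pi> (\<phi> w q)) n = w <#\<^bsub>G\<^esub> c \<longleftrightarrow> snd (\<pi> q) n = c" for q
  proof -
    have "snd (\<pi> (\<phi> w q)) \<in> Cyl n (w <#\<^bsub>G\<^esub> c) \<longleftrightarrow> snd (\<pi> q) \<in> actZ r w -` Cyl n (w <#\<^bsub>G\<^esub> c) \<inter> Zs"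
      using pi_equivariant[OF w] snd_pi_in_Zset by (simp add: actX_def)
    also have "\<dots> \<longleftrightarrow> snd (\<pi> q) \<in> Cyl n c"
      using actZ_preimage_Cyl[OF w n] G.lcos_inv_cancel[OF w c] c w
      by (simp add: G.l_coset_subset_G)
    finally show ?thesis
      using snd_pi_in_Zset by (simp add: Cyl_def)
  qed
  then show ?thesis
    by (auto simp: Acyl_def)
qed

context
  fixes \<nu> :: "(nat \<Rightarrow> letter) \<Rightarrow> 'x measure"
  assumes RIM: "is_RIM r \<phi> (fst \<circ> \<pi>) \<nu>"
begin

lemma RIM_prob_space: "y \<in> Ys \<Longrightarrow> prob_space (\<nu> y)"
  using RIM by (simp add: is_RIM_def)

lemma RIM_sets: "y \<in> Ys \<Longrightarrow> sets (\<nu> y) = sets borel"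
  using RIM by (simp add: is_RIM_def)

lemma RIM_equivariant: "w \<in> carrier G \<Longrightarrow> y \<in> Ys \<Longrightarrow> \<nu> (actY w y) = distr (\<nu> y) borel (\<phi> w)"
  using RIM by (simp add: is_RIM_def carrier_G)

lemma RIM_continuous:
  "continuous_on UNIV g \<Longrightarrow> continuous_map (topY r) euclideanreal (\<lambda>y. integral\<^sup>L (\<nu> y) g)"
  using RIM by (simp add: is_RIM_def)

lemma RIM_msupp: "y \<in> Ys \<Longrightarrow> msupp (\<nu> y) \<subseteq> (fst \<circ> \<pi>) -` {y}"
  using RIM by (simp add: is_RIM_def)

lemma RIM_Acyl_equivariant:
  assumes w: "w \<in> carrier G" and y: "y \<in> Ys" and n: "n \<ge> 1" and c: "c \<subseteq> carrier G"
  shows "measure (\<nu> (actY w y)) (Acyl n (w <#\<^bsub>G\<^esub> c)) = measure (\<nu> y) (Acyl n c)"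
proof -
  have sets: "sets (\<nu> y) = sets borel"
    by (rule RIM_sets[OF y])
  have meas: "\<phi> w \<in> measurable (\<nu> y) borel"
    using borel_measurable_continuous_onI[OF continuous_phi[OF w]] measurable_cong_sets[OF sets refl]
    by blast
  have "measure (\<nu> (actY w y)) (Acyl n (w <#\<^bsub>G\<^esub> c))
      = measure (\<nu> y) (\<phi> w -` Acyl n (w <#\<^bsub>G\<^esub> c) \<inter> space (\<nu> y))"
    using RIM_equivariant[OF w y] measure_distr[OF meas Acyl_in_borel] by simp
  also have "\<phi> w -` Acyl n (w <#\<^bsub>G\<^esub> c) \<inter> space (\<nu> y) = Acyl n c"
    using phi_preimage_Acyl[OF w n c] sets_eq_imp_space_eq[OF sets] by simp
  finally show ?thesis .
qed

lemma RIM_Acyl_continuous: "continuous_map (topY r) euclideanreal (\<lambda>y. measure (\<nu> y) (Acyl n c))"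
proof -
  have cont: "continuous_map (topY r) euclideanreal
      (\<lambda>y. integral\<^sup>L (\<nu> y) (indicator (Acyl n c) :: 'x \<Rightarrow> real))"
    by (rule RIM_continuous[OF continuous_on_indicator_clopen]) (use open_closed_Acyl in auto)
  have eq: "integral\<^sup>L (\<nu> y) (indicator (Acyl n c) :: 'x \<Rightarrow> real) = measure (\<nu> y) (Acyl n c)"
    if "y \<in> topspace (topY r)" for y
  proof -
    have "space (\<nu> y) = UNIV"
      using that sets_eq_imp_space_eq[OF RIM_sets] by simp
    then show ?thesis
      by (simp add: integral_indicator)
  qed
  show ?thesis
    by (rule continuous_map_eq[OF cont eq])
qed

lemma RIM_Acyl_constant:
  assumes n: "n \<ge> 1" and c: "c \<in> rcosets\<^bsub>G\<^esub> (N n)" and y: "y \<in> Ys" and y0: "y0 \<in> Ys"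
  shows "measure (\<nu> y) (Acyl n c) = measure (\<nu> y0) (Acyl n c)"
proof (rule ccontr)
  let ?L = "\<lambda>y. measure (\<nu> y) (Acyl n c)"
  assume "?L y \<noteq> ?L y0"
  then have e: "dist (?L y) (?L y0) > 0"
    by simp
  let ?V = "{y' \<in> topspace (topY r). ?L y' \<in> ball (?L y0) (dist (?L y) (?L y0))}"
  have "openin (topY r) ?V"
    using openin_continuous_map_preimage[OF RIM_Acyl_continuous, of "ball (?L y0) (dist (?L y) (?L y0))"]
    by simp
  moreover have "y0 \<in> ?V"
    using y0 e by simp
  ultimately obtain k where k: "\<forall>y'\<in>Ys. (\<forall>i<k. y' i = y0 i) \<longrightarrow> y' \<in> ?V"
    using topY_cylinder_nbhd by blast
  obtain h where h: "h \<in> N n" "\<forall>i<k. actY h y i = y0 i"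
    using finite_index_normal_orbit_dense[OF r_ge_2 N_normal[OF n] finite_rcosets_N[OF n] y0 y]
    by blast
  have h_carrier: "h \<in> carrier G"
    using h(1) subgroup.mem_carrier[OF N_subgroup[OF n]] by blast
  have "?L (actY h y) = ?L y"
    using RIM_Acyl_equivariant[OF h_carrier y n rcosets_N_subset[OF n c]]
      normal.lcos_rcosets_fixed[OF N_normal[OF n] h(1) c] by simp
  moreover have "actY h y \<in> ?V"
    using k h(2) actY_in_Yset[OF h_carrier y] by blast
  ultimately show False
    by (simp add: dist_commute)
qed

lemma RIM_Acyl:
  assumes y: "y \<in> Ys" and n: "n \<ge> 1" and c: "c \<in> rcosets\<^bsub>G\<^esub> (N n)"
  shows "measure (\<nu> y) (Acyl n c) = 1 / card (rcosets\<^bsub>G\<^esub> (N n))"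
proof -
  interpret prob_space "\<nu> y"
    by (rule RIM_prob_space[OF y])
  have same: "measure (\<nu> y) (Acyl n c') = measure (\<nu> y) (Acyl n c)"
    if c': "c' \<in> rcosets\<^bsub>G\<^esub> (N n)" for c'
  proof -
    obtain w where w: "w \<in> carrier G" "w <#\<^bsub>G\<^esub> c = c'"
      using normal.lcos_rcosets_transitive[OF N_normal[OF n] c c'] by blast
    have "measure (\<nu> y) (Acyl n c') = measure (\<nu> (actY w y)) (Acyl n (w <#\<^bsub>G\<^esub> c))"
      using RIM_Acyl_constant[OF n c' y actY_in_Yset[OF w(1) y]] w(2) by simp
    also have "\<dots> = measure (\<nu> y) (Acyl n c)"
      by (rule RIM_Acyl_equivariant[OF w(1) y n rcosets_N_subset[OF n c]])
    finally show ?thesis .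
  qed
  show ?thesis
  proof (rule prob_equal_on_finite_partition[OF finite_rcosets_N[OF n]])
    show "disjoint_family_on (Acyl n) (rcosets\<^bsub>G\<^esub> (N n))"
      by (auto simp: disjoint_family_on_def Acyl_def)
    show "(\<Union>c\<in>rcosets\<^bsub>G\<^esub> (N n). Acyl n c) = space (\<nu> y)"
      using Zset_rcosets[OF snd_pi_in_Zset n] sets_eq_imp_space_eq[OF RIM_sets[OF y]]
      by (auto simp: Acyl_def)
    show "Acyl n ` (rcosets\<^bsub>G\<^esub> (N n)) \<subseteq> events"
      using Acyl_in_borel RIM_sets[OF y] by auto
  qed (use same in blast)
qed

lemma RIM_distr_snd_pi:
  assumes y: "y \<in> Ys"
  shows "distr (\<nu> y) Zsigma (\<lambda>q. snd (\<pi> q)) = haar"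
proof (rule haar_eqI)
  have meas: "(\<lambda>q. snd (\<pi> q)) \<in> measurable (\<nu> y) Zsigma"
    using measurable_snd_pi measurable_cong_sets[OF RIM_sets[OF y] refl] by blast
  then show "prob_space (distr (\<nu> y) Zsigma (\<lambda>q. snd (\<pi> q)))"
    by (rule prob_space.prob_space_distr[OF RIM_prob_space[OF y]])
  fix n c assume n: "n \<ge> 1" and c: "c \<in> rcosets\<^bsub>G\<^esub> (N n)"
  have "(\<lambda>q. snd (\<pi> q)) -` Cyl n c \<inter> space (\<nu> y) = Acyl n c"
    using snd_pi_in_Zset sets_eq_imp_space_eq[OF RIM_sets[OF y]] by (auto simp: Cyl_def Acyl_def)
  then have "emeasure (distr (\<nu> y) Zsigma (\<lambda>q. snd (\<pi> q))) (Cyl n c) = emeasure (\<nu> y) (Acyl n c)"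
    using emeasure_distr[OF meas Cyl_in_Zsigma[OF n]] by simp
  also have "\<dots> = emeasure haar (Cyl n c)"
  proof -
    interpret \<nu>: prob_space "\<nu> y"
      by (rule RIM_prob_space[OF y])
    interpret haar: prob_space haar
      by (rule prob_space_haar)
    show ?thesis
      using RIM_Acyl[OF y n c] measure_haar_Cyl[OF n c]
      by (simp add: \<nu>.emeasure_eq_measure haar.emeasure_eq_measure)
  qed
  finally show "emeasure (distr (\<nu> y) Zsigma (\<lambda>q. snd (\<pi> q))) (Cyl n c) = emeasure haar (Cyl n c)" .
qed simp

lemma RIM_null_off_fibre:
  assumes y: "y \<in> Ys"
  shows "{q. fst (\<pi> q) \<noteq> y} \<in> null_sets (\<nu> y)"
proof -
  define V where "V k = {q. \<exists>i<k. fst (\<pi> q) i \<noteq> y i}" for k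
  have "closed (V k)" for k
  proof -
    have "openin euclidean {q \<in> topspace euclidean. fst (\<pi> q) \<in> {y' \<in> Ys. \<forall>i<k. y' i = y i}}"
      using openin_continuous_map_preimage[OF continuous_map_fst_pi openin_topY_cylinder] .
    moreover have "{q \<in> topspace euclidean. fst (\<pi> q) \<in> {y' \<in> Ys. \<forall>i<k. y' i = y i}} = - V k"
      using fst_pi_in_Yset by (auto simp: V_def)
    ultimately show ?thesis
      by (simp add: closed_open)
  qed
  moreover have "V k \<inter> msupp (\<nu> y) = {}" for k
    using RIM_msupp[OF y] by (auto simp: V_def)
  ultimately have null: "V k \<in> null_sets (\<nu> y)" for k
    using compact_Int_closed[OF compact_UNIV] RIM_sets[OF y]
    by (intro compact_disjoint_msupp_null) auto
  have "{q. fst (\<pi> q) \<noteq> y} = (\<Union>k. V k)"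
  proof (intro equalityI subsetI)
    fix q assume "q \<in> {q. fst (\<pi> q) \<noteq> y}"
    then obtain i where "fst (\<pi> q) i \<noteq> y i"
      by auto
    then have "q \<in> V (Suc i)"
      by (auto simp: V_def)
    then show "q \<in> (\<Union>k. V k)"
      by blast
  qed (auto simp: V_def)
  then show ?thesis
    using null_sets_UN[OF null] by simp
qed

lemma RIM_null_Zorb:
  assumes y: "y \<in> Ys"
  shows "{q. snd (\<pi> q) \<in> Zorb y} \<in> null_sets (\<nu> y)"
proof -
  have meas: "(\<lambda>q. snd (\<pi> q)) \<in> measurable (\<nu> y) Zsigma"
    using measurable_snd_pi measurable_cong_sets[OF RIM_sets[OF y] refl] by blast
  have space: "space (\<nu> y) = UNIV"
    using sets_eq_imp_space_eq[OF RIM_sets[OF y]] by simp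
  have Z: "Zorb y \<in> sets Zsigma"
    using countable_in_Zsigma[OF countable_Zorb] by (auto simp: Zorb_def)
  have "{q. snd (\<pi> q) \<in> Zorb y} = (\<lambda>q. snd (\<pi> q)) -` Zorb y \<inter> space (\<nu> y)"
    using space by auto
  moreover have "(\<lambda>q. snd (\<pi> q)) -` Zorb y \<inter> space (\<nu> y) \<in> null_sets (\<nu> y)"
    using null_sets_distr_iff[OF meas] Zorb_null RIM_distr_snd_pi[OF y] Z by simp
  ultimately show ?thesis
    by simp
qed

lemma RIM_emeasure_open:
  assumes y: "y \<in> Ys" and U: "open U"
  shows "emeasure (\<nu> y) U = emeasure haar (lift y -` U \<inter> Zs)"
proof -
  let ?S = "lift y -` U \<inter> Zs"
  let ?B = "(\<lambda>q. snd (\<pi> q)) -` ?S"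
  have meas: "(\<lambda>q. snd (\<pi> q)) \<in> measurable (\<nu> y) Zsigma"
    using measurable_snd_pi measurable_cong_sets[OF RIM_sets[OF y] refl] by blast
  have space: "space (\<nu> y) = UNIV"
    using sets_eq_imp_space_eq[OF RIM_sets[OF y]] by simp
  have S: "?S \<in> sets Zsigma"
    using measurable_sets[OF measurable_lift[OF y] borel_open[OF U]] by simp
  have "q \<in> U \<longleftrightarrow> q \<in> ?B" if "fst (\<pi> q) = y" "snd (\<pi> q) \<notin> Zorb y" for q
  proof -
    have "\<pi> q = (y, snd (\<pi> q))"
      using that(1) by (metis prod.collapse)
    then have "q = lift y (snd (\<pi> q))"
      using lift_unique[OF y snd_pi_in_Zset that(2)] by blast
    then show ?thesis
      using snd_pi_in_Zset by (metis (no_types, lifting) IntI IntD1 vimageE vimageI)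
  qed
  then have "AE q in \<nu> y. q \<in> U \<longleftrightarrow> q \<in> ?B"
    by (intro AE_I'[OF null_sets.Un[OF RIM_null_off_fibre[OF y] RIM_null_Zorb[OF y]]]) auto
  then have "emeasure (\<nu> y) U = emeasure (\<nu> y) ?B"
    using measurable_sets[OF meas S] space RIM_sets[OF y] U by (intro emeasure_eq_AE) auto
  also have "\<dots> = emeasure (distr (\<nu> y) Zsigma (\<lambda>q. snd (\<pi> q))) ?S"
    using emeasure_distr[OF meas S] space by simp
  also have "\<dots> = emeasure haar ?S"
    by (simp add: RIM_distr_snd_pi[OF y])
  finally show ?thesis .
qed

end

lemma RIM_unique:
  assumes RIM: "is_RIM r \<phi> (fst \<circ> \<pi>) \<nu>" and y: "y \<in> Ys"
  shows "\<nu> y = mu y"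
proof (rule measure_eqI_generator_eq[where E = "{U. open U}" and \<Omega> = UNIV and A = "\<lambda>_. UNIV"])
  show "Int_stable {U :: 'x set. open U}"
    by (auto simp: Int_stable_def)
  show "emeasure (\<nu> y) U = emeasure (mu y) U" if "U \<in> {U. open U}" for U
    using that RIM_emeasure_open[OF RIM y] RIM_emeasure_open[OF mu_is_RIM y] by simp
  show "sets (\<nu> y) = sigma_sets UNIV {U. open U}"
    using RIM_sets[OF RIM y] sets_borel by simp
  show "sets (mu y) = sigma_sets UNIV {U. open U}"
    using sets_borel by simp
  show "emeasure (\<nu> y) UNIV \<noteq> \<infinity>"
    using prob_space.emeasure_space_1[OF RIM_prob_space[OF RIM y]]
      sets_eq_imp_space_eq[OF RIM_sets[OF RIM y]] by simp
qed auto

end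

theorem lemma5p2:
  fixes r :: nat and N :: "nat \<Rightarrow> word set" and \<gamma> :: "nat \<Rightarrow> word"
    and \<phi> :: "word \<Rightarrow> 'x::topological_space \<Rightarrow> 'x" and \<pi> :: "'x \<Rightarrow> ptX"
  assumes "r \<ge> 2"
    and "admissible_seq r N"
    and "admissible_gamma r N \<gamma>"
    and "mcmahon_ext r N \<gamma> \<phi> \<pi>"
  shows "\<exists>\<mu>. is_RIM r \<phi> (fst \<circ> \<pi>) \<mu> \<and>
           (\<forall>\<mu>'. is_RIM r \<phi> (fst \<circ> \<pi>) \<mu>' \<longrightarrow> (\<forall>y\<in>Yset r. \<mu>' y = \<mu> y))"
proof -
  interpret mcmahon_setting r N \<gamma> \<phi> \<pi>
    using assms(1,2,4) by (intro mcmahon_setting.intro profinite_completion.intro mcmahon_setting_axioms.intro)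
  show ?thesis
    using mu_is_RIM RIM_unique by blast
qed

end
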